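(* Let $K$ be an imaginary quadratic field with $\mathcal{O}_K^\times=\{\pm1\}$ (i.e. $K\neq\mathbb{Q}(\sqrt{-1}),\mathbb{Q}(\sqrt{-3})$), fix an embedding $K\hookrightarrow\mathbb{C}$, and let $C$ be a nonzero ideal of $\mathcal{O}_K$, viewed as a lattice in $\mathbb{C}$. Let $U\subseteq\mathbb{C}$ be the union of the open disks of radius $\sqrt{\mathrm{Nm}(C)}$ centered at the elements of $C$. If $\mathbb{C}\setminus U$ contains a nonempty open set, then $C$ is not a Euclidean ideal.
   Context: $\mathcal{O}_K$ is the ring of integers of $K$ and $\mathrm{Nm}(C)=|\mathcal{O}_K/C|$. Let $E$ be the set of fractional ideals of $\mathcal{O}_K$ containing $\mathcal{O}_K$. A nonzero ideal $C\subseteq\mathcal{O}_K$ is Euclidean if there exists a function $\psi:E\to\mathbb{N}$ such that for all $I\in E$ and all $x\in IC\setminus C$ there exists $y\in C$ with $\psi((x+y)^{-1}IC)<\psi(I)$. *)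

theory Defs
  imports "HOL-Analysis.Analysis" "HOL-Computational_Algebra.Polynomial"
begin

definition quad_field :: "nat \<Rightarrow> complex set" where
  "quad_field d = {of_rat a + of_rat b * (\<i> * complex_of_real (sqrt (real d))) | a b. True}"

definition algebraic_integer :: "complex \<Rightarrow> bool" where
  "algebraic_integer z \<longleftrightarrow>
     (\<exists>p :: int poly. lead_coeff p = 1 \<and> poly (map_poly of_int p) z = 0)"

definition ring_of_integers :: "complex set \<Rightarrow> complex set" where
  "ring_of_integers K = {z \<in> K. algebraic_integer z}"

definition units_of_ring :: "complex set \<Rightarrow> complex set" where
  "units_of_ring R = {u \<in> R. \<exists>v \<in> R. u * v = 1}"

definition nonzero_ideal :: "complex set \<Rightarrow> complex set \<Rightarrow> bool" where
  "nonzero_ideal R C \<longleftrightarrow> C \<subseteq> R \<and> 0 \<in> C \<and> C \<noteq> {0} \<and>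
     (\<forall>x\<in>C. \<forall>y\<in>C. x + y \<in> C) \<and> (\<forall>r\<in>R. \<forall>x\<in>C. r * x \<in> C)"

definition fractional_ideal :: "complex set \<Rightarrow> complex set \<Rightarrow> complex set \<Rightarrow> bool" where
  "fractional_ideal K R I \<longleftrightarrow> I \<subseteq> K \<and> 0 \<in> I \<and> I \<noteq> {0} \<and>
     (\<forall>x\<in>I. \<forall>y\<in>I. x + y \<in> I) \<and> (\<forall>r\<in>R. \<forall>x\<in>I. r * x \<in> I) \<and>
     (\<exists>c\<in>R. c \<noteq> 0 \<and> (\<lambda>x. c * x) ` I \<subseteq> R)"

definition frac_ideal_mult :: "complex set \<Rightarrow> complex set \<Rightarrow> complex set" where
  "frac_ideal_mult I J = {\<Sum>i<n. a i * b i | (n::nat) a b. \<forall>i<n. a i \<in> I \<and> b i \<in> J}"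

text \<open>The absolute norm Nm(C) = |R/C|.\<close>
definition ideal_norm :: "complex set \<Rightarrow> complex set \<Rightarrow> nat" where
  "ideal_norm R C = card ((\<lambda>x. (\<lambda>c. x + c) ` C) ` R)"

text \<open>Euclidean ideal (E = fractional ideals containing R).\<close>
definition euclidean_ideal :: "complex set \<Rightarrow> complex set \<Rightarrow> complex set \<Rightarrow> bool" where
  "euclidean_ideal K R C \<longleftrightarrow>
     (\<exists>\<psi> :: complex set \<Rightarrow> nat.
        \<forall>I. fractional_ideal K R I \<and> R \<subseteq> I \<longrightarrow>
          (\<forall>x \<in> frac_ideal_mult I C - C. \<exists>y \<in> C.
              \<psi> ((\<lambda>z. z / (x + y)) ` frac_ideal_mult I C) < \<psi> I))"

end

theory Submission
  imports Defs
begin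

text \<open>
  By Hurwitz's theorem \<open>A A\<^sup>- = Nm(A) \<O>\<^sub>K\<close>, every fractional ideal \<open>J\<close> satisfies
  \<open>J J\<^sup>- = q \<O>\<^sub>K\<close> for a real \<open>q > 0\<close>, and a pigeonhole argument in the lattice \<open>J\<close>
  followed by rounding shows that every point of \<open>\<complex>\<close> lies within \<open>(1 + \<surd>d)\<^sup>2 \<surd>q\<close> of \<open>J\<close>.
  Let \<open>p\<close> be the centre of a disc avoided by all discs of radius \<open>\<surd>Nm(C)\<close> around \<open>C\<close>.
  If \<open>I \<supseteq> \<O>\<^sub>K\<close> and \<open>q\<close> is small for \<open>J = I C\<close>, then \<open>J\<close> contains some \<open>x\<close> close to \<open>p\<close>;
  hence \<open>x \<notin> C\<close> and \<open>|x + y| \<ge> \<surd>Nm(C)\<close> for every \<open>y \<in> C\<close>, so each \<open>I' = (x + y)\<^sup>-\<^sup>1 I C\<close> is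
  again a fractional ideal containing \<open>\<O>\<^sub>K\<close> whose \<open>I' C\<close> has \<open>q' = q Nm(C) / |x + y|\<^sup>2 \<le> q\<close>.
  A Euclidean function would have to decrease strictly on one of these \<open>I'\<close>, which is impossible
  if \<open>I\<close> is chosen with minimal value among all such small ideals.
\<close>

section \<open>Integrality criteria\<close>

lemma Ints_of_Rats_bounded_denominator:
  fixes q :: real and D :: int
  assumes q: "q \<in> \<rat>" and D: "D > 0" and h: "\<And>k. of_int D * q ^ k \<in> \<int>"
  shows "q \<in> \<int>"
proof -
  obtain r where r: "q = of_rat r" using q by (auto elim: Rats_cases)
  obtain a b where ab: "quotient_of r = (a, b)" by (cases "quotient_of r")
  have b0: "b > 0" using ab quotient_of_denom_pos by blast
  have cop: "coprime a b" using ab quotient_of_coprime by blast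
  have qab: "q = of_int a / of_int b" using r quotient_of_div[OF ab] by (simp add: of_rat_divide)
  have dvd: "b ^ k dvd D" for k
  proof -
    obtain m where m: "of_int D * q ^ k = of_int m" using h[of k] by (auto elim: Ints_cases)
    have "of_int D * of_int a ^ k = (of_int m * of_int b ^ k :: real)"
      using m b0 by (simp add: qab power_divide field_simps)
    hence "D * a ^ k = m * b ^ k" by (metis of_int_eq_iff of_int_mult of_int_power)
    hence "b ^ k dvd D * a ^ k" by (metis dvd_triv_right)
    moreover have "coprime (b ^ k) (a ^ k)" using cop by (simp add: coprime_commute)
    ultimately show ?thesis using coprime_dvd_mult_left_iff by blast
  qed
  have "b = 1"
  proof (rule ccontr)
    assume "b \<noteq> 1" hence "b \<ge> 2" using b0 by simp
    have "b ^ nat D \<le> D" using dvd[of "nat D"] D by (simp add: zdvd_imp_le)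
    moreover have "2 ^ nat D \<le> b ^ nat D" using \<open>b \<ge> 2\<close> by (simp add: power_mono)
    moreover have "int (nat D) < 2 ^ nat D" by (metis of_nat_less_two_power of_nat_numeral of_nat_power)
    ultimately show False using D by simp
  qed
  thus ?thesis using qab by simp
qed

lemma Rats_ex_denominator: "(x :: real) \<in> \<rat> \<Longrightarrow> \<exists>D::int. D > 0 \<and> of_int D * x \<in> \<int>"
proof -
  assume "x \<in> \<rat>"
  then obtain r where r: "x = of_rat r" by (auto elim: Rats_cases)
  obtain a b where ab: "quotient_of r = (a, b)" by (cases "quotient_of r")
  have b0: "b > 0" using ab quotient_of_denom_pos by blast
  have "of_int b * x = of_int a" using b0 quotient_of_div[OF ab] by (simp add: r of_rat_divide)
  thus ?thesis using b0 by (intro exI[of _ b]) simp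
qed

lemma Ints_of_Rats_power2:
  fixes q :: real
  assumes q: "q \<in> \<rat>" and h: "q ^ 2 \<in> \<int>"
  shows "q \<in> \<int>"
proof -
  obtain b :: int where b: "b > 0" "of_int b * q \<in> \<int>" using Rats_ex_denominator[OF q] by blast
  have "of_int b * q ^ k \<in> \<int>" for k
  proof -
    have "of_int b * q ^ k = (of_int b * q ^ (k mod 2)) * (q ^ 2) ^ (k div 2)"
      by (metis mod_div_mult_eq power_add power_mult mult.commute mult.assoc)
    moreover have "of_int b * q ^ (k mod 2) \<in> \<int>"
      using b by (cases "k mod 2 = 0") (simp_all add: mod_2_eq_odd)
    ultimately show ?thesis using h by (metis Ints_mult Ints_power)
  qed
  thus ?thesis using Ints_of_Rats_bounded_denominator[OF q b(1)] by blast
qed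

lemma int_set_ex_generator:
  fixes S :: "int set"
  assumes add: "\<And>x y. x \<in> S \<Longrightarrow> y \<in> S \<Longrightarrow> x + y \<in> S"
    and mult: "\<And>n x. x \<in> S \<Longrightarrow> n * x \<in> S"
    and k: "k \<in> S" "k > 0"
  obtains a where "a > 0" "a \<in> S" "\<And>x. x \<in> S \<Longrightarrow> a dvd x"
proof -
  define P where "P n \<longleftrightarrow> n > 0 \<and> int n \<in> S" for n :: nat
  have "P (nat k)" using k by (simp add: P_def)
  hence P0: "P (LEAST n. P n)" by (rule LeastI)
  define a where "a = int (LEAST n. P n)"
  have a: "a > 0" "a \<in> S" using P0 by (simp_all add: P_def a_def)
  have "a dvd x" if x: "x \<in> S" for x
  proof -
    have eq: "x mod a = x + (- (x div a)) * a" by (simp add: minus_div_mult_eq_mod[symmetric])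
    have r: "x mod a \<in> S" unfolding eq using add[OF x mult[OF a(2)]] .
    have "x mod a = 0"
    proof (rule ccontr)
      assume "x mod a \<noteq> 0"
      hence "P (nat (x mod a))" using r pos_mod_sign[OF a(1), of x] by (simp add: P_def)
      hence "(LEAST n. P n) \<le> nat (x mod a)" by (rule Least_le)
      hence "a \<le> x mod a" using pos_mod_sign[OF a(1), of x] by (simp add: a_def)
      thus False using pos_mod_bound[OF a(1), of x] by simp
    qed
    thus ?thesis by (simp add: dvd_eq_mod_eq_0)
  qed
  with a that show ?thesis by blast
qed

lemma bezout_int3: "\<exists>u v w. u * m + v * k + w * t = gcd m (gcd k t)" for m k t :: int
proof -
  obtain u v where uv: "u * m + v * gcd k t = gcd m (gcd k t)" using bezout_int by blast
  obtain u' v' where uv': "u' * k + v' * t = gcd k t" using bezout_int by blast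
  have "u * m + (v * u') * k + (v * v') * t = u * m + v * (u' * k + v' * t)" by (simp add: algebra_simps)
  hence "u * m + (v * u') * k + (v * v') * t = gcd m (gcd k t)" unfolding uv' uv .
  thus ?thesis by blast
qed

lemma eq_0_if_diff_of_residues:
  fixes j j' y c :: int
  assumes "0 \<le> j" "j < c" "0 \<le> j'" "j' < c" "j - j' = y * c"
  shows "y = 0"
proof (rule ccontr)
  assume y: "y \<noteq> 0"
  have "c \<le> \<bar>y\<bar> * c" using y assms(1,2) mult_right_mono[of 1 "\<bar>y\<bar>" c] by simp
  also have "\<dots> = \<bar>j - j'\<bar>" using assms by (simp add: abs_mult)
  finally show False using assms by linarith
qed

lemma map_poly_of_int_add:
  "map_poly (of_int :: int \<Rightarrow> 'a::comm_ring_1) (p + q) = map_poly of_int p + map_poly of_int q"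
  by (rule poly_eqI) (simp add: coeff_map_poly)

lemma map_poly_of_int_mult:
  "map_poly (of_int :: int \<Rightarrow> 'a::comm_ring_1) (p * q) = map_poly of_int p * map_poly of_int q"
  by (rule poly_eqI) (simp add: coeff_map_poly coeff_mult)

lemma poly_eq_sum_lessThan:
  fixes h :: "'a::comm_semiring_1 poly"
  assumes "degree h < n"
  shows "poly h x = (\<Sum>i<n. coeff h i * x ^ i)"
proof -
  have "poly h x = (\<Sum>i\<le>degree h. coeff h i * x ^ i)" by (rule poly_altdef)
  also have "\<dots> = (\<Sum>i<n. coeff h i * x ^ i)"
    using assms by (intro sum.mono_neutral_left) (auto simp: coeff_eq_0)
  finally show ?thesis .
qed

lemma monic_root_power_eq_int_combination:
  fixes p :: "int poly" and u :: complex
  assumes lc: "lead_coeff p = 1" and root: "poly (map_poly of_int p) u = 0"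
  shows "\<exists>c. u ^ k = (\<Sum>i<degree p. of_int (c i) * u ^ i)"
proof -
  have p0: "p \<noteq> 0" using lc by auto
  have "degree p \<noteq> 0"
  proof
    assume "degree p = 0"
    hence "p = 1" using lc degree_0_id[of p] by (simp add: one_pCons)
    thus False using root by simp
  qed
  obtain q s where qs: "pseudo_divmod (monom 1 k) p = (q, s)" by (cases "pseudo_divmod (monom 1 k) p")
  have e: "monom 1 k = p * q + s" using pseudo_divmod(1)[OF p0 qs] lc by simp
  have ds: "degree s < degree p" using pseudo_divmod(2)[OF p0 qs] \<open>degree p \<noteq> 0\<close> by auto
  have "u ^ k = poly (map_poly of_int (monom 1 k)) u" by (simp add: map_poly_monom poly_monom)
  also have "\<dots> = poly (map_poly of_int s) u"
    by (simp only: e map_poly_of_int_add map_poly_of_int_mult poly_add poly_mult root) simp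
  also have "\<dots> = (\<Sum>i<degree p. coeff (map_poly of_int s) i * u ^ i)"
    using map_poly_degree_leq[of "of_int :: int \<Rightarrow> complex" s] ds by (intro poly_eq_sum_lessThan) simp
  also have "\<dots> = (\<Sum>i<degree p. of_int (coeff s i) * u ^ i)"
    by (simp add: coeff_map_poly)
  finally show ?thesis by blast
qed

section \<open>Products of fractional ideals\<close>

notation frac_ideal_mult (infixl \<open>\<star>\<close> 70)

lemma frac_ideal_mult_memI: "x \<in> I \<Longrightarrow> y \<in> J \<Longrightarrow> x * y \<in> I \<star> J"
  unfolding frac_ideal_mult_def by (intro CollectI exI[of _ 1] exI[of _ "\<lambda>_. x"] exI[of _ "\<lambda>_. y"]) simp

lemma zero_in_frac_ideal_mult: "0 \<in> I \<star> J"
  unfolding frac_ideal_mult_def by (intro CollectI exI[of _ 0]) simp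

lemma frac_ideal_mult_subsetI:
  assumes "0 \<in> S" "\<And>u v. u \<in> S \<Longrightarrow> v \<in> S \<Longrightarrow> u + v \<in> S"
    and "\<And>x y. x \<in> I \<Longrightarrow> y \<in> J \<Longrightarrow> x * y \<in> S"
  shows "I \<star> J \<subseteq> S"
proof
  fix z assume "z \<in> I \<star> J"
  then obtain n :: nat and a b where z: "z = (\<Sum>i<n. a i * b i)" and ab: "\<forall>i<n. a i \<in> I \<and> b i \<in> J"
    unfolding frac_ideal_mult_def by blast
  have "(\<Sum>i<k. a i * b i) \<in> S" if "k \<le> n" for k
    using that by (induction k) (use ab assms in simp_all)
  thus "z \<in> S" using z by simp
qed

lemma frac_ideal_mult_add_product:
  assumes p: "p \<in> I \<star> J" and x: "x \<in> I" and y: "y \<in> J"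
  shows "p + x * y \<in> I \<star> J"
proof -
  obtain n :: nat and a b where p: "p = (\<Sum>i<n. a i * b i)" and ab: "\<forall>i<n. a i \<in> I \<and> b i \<in> J"
    using p unfolding frac_ideal_mult_def by blast
  have "(\<Sum>i<Suc n. (a(n := x)) i * (b(n := y)) i) = p + x * y" unfolding p by simp
  moreover have "\<forall>i<Suc n. (a(n := x)) i \<in> I \<and> (b(n := y)) i \<in> J"
    using ab x y by (simp add: less_Suc_eq)
  ultimately show ?thesis unfolding frac_ideal_mult_def
    by (intro CollectI exI[of _ "Suc n"] exI[of _ "a(n := x)"] exI[of _ "b(n := y)"]) simp
qed

lemma frac_ideal_mult_add: "p \<in> I \<star> J \<Longrightarrow> q \<in> I \<star> J \<Longrightarrow> p + q \<in> I \<star> J"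
proof -
  have "I \<star> J \<subseteq> {q. \<forall>p\<in>I \<star> J. p + q \<in> I \<star> J}"
    by (rule frac_ideal_mult_subsetI) (auto simp: add.assoc[symmetric] frac_ideal_mult_add_product)
  thus "p \<in> I \<star> J \<Longrightarrow> q \<in> I \<star> J \<Longrightarrow> p + q \<in> I \<star> J" by blast
qed

lemma frac_ideal_mult_left_mult:
  assumes "\<And>x. x \<in> I \<Longrightarrow> r * x \<in> I" and "p \<in> I \<star> J"
  shows "r * p \<in> I \<star> J"
proof -
  have "I \<star> J \<subseteq> {z. r * z \<in> I \<star> J}"
    by (rule frac_ideal_mult_subsetI)
      (auto simp: zero_in_frac_ideal_mult distrib_left mult.assoc[symmetric]
            intro: frac_ideal_mult_add frac_ideal_mult_memI assms(1))
  thus ?thesis using assms(2) by blast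
qed

lemma frac_ideal_mult_commute: "I \<star> J = J \<star> I"
proof -
  have "I \<star> J \<subseteq> J \<star> I" for I J
  proof (rule frac_ideal_mult_subsetI)
    show "x * y \<in> J \<star> I" if "x \<in> I" "y \<in> J" for x y
      using frac_ideal_mult_memI[OF that(2,1)] by (simp add: mult.commute)
  qed (auto simp: zero_in_frac_ideal_mult intro: frac_ideal_mult_add)
  thus ?thesis by blast
qed

lemma frac_ideal_mult_assoc: "(I \<star> J) \<star> L = I \<star> (J \<star> L)"
proof
  show "(I \<star> J) \<star> L \<subseteq> I \<star> (J \<star> L)"
  proof (rule frac_ideal_mult_subsetI)
    fix p l assume p: "p \<in> I \<star> J" and l: "l \<in> L"
    have "I \<star> J \<subseteq> {z. z * l \<in> I \<star> (J \<star> L)}"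
      by (rule frac_ideal_mult_subsetI)
        (auto simp: zero_in_frac_ideal_mult distrib_right mult.assoc
              intro: frac_ideal_mult_add frac_ideal_mult_memI l)
    thus "p * l \<in> I \<star> (J \<star> L)" using p by blast
  qed (auto simp: zero_in_frac_ideal_mult intro: frac_ideal_mult_add)
next
  show "I \<star> (J \<star> L) \<subseteq> (I \<star> J) \<star> L"
  proof (rule frac_ideal_mult_subsetI)
    fix x q assume x: "x \<in> I" and q: "q \<in> J \<star> L"
    have "J \<star> L \<subseteq> {z. x * z \<in> (I \<star> J) \<star> L}"
      by (rule frac_ideal_mult_subsetI)
        (auto simp: zero_in_frac_ideal_mult distrib_left mult.assoc[symmetric]
              intro: frac_ideal_mult_add frac_ideal_mult_memI x)
    thus "x * q \<in> (I \<star> J) \<star> L" using q by blast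
  qed (auto simp: zero_in_frac_ideal_mult intro: frac_ideal_mult_add)
qed

lemma frac_ideal_mult_left_commute: "I \<star> (J \<star> L) = J \<star> (I \<star> L)"
  by (metis frac_ideal_mult_assoc frac_ideal_mult_commute)

lemma image_frac_ideal_mult:
  fixes f :: "complex \<Rightarrow> complex"
  assumes add: "\<And>x y. f (x + y) = f x + f y" and mult: "\<And>x y. f (x * y) = f x * f y"
    and zero: "f 0 = 0"
  shows "f ` (I \<star> J) = (f ` I) \<star> (f ` J)"
proof
  have "I \<star> J \<subseteq> {z. f z \<in> (f ` I) \<star> (f ` J)}"
    by (rule frac_ideal_mult_subsetI)
      (auto simp: zero add mult zero_in_frac_ideal_mult intro: frac_ideal_mult_add frac_ideal_mult_memI)
  thus "f ` (I \<star> J) \<subseteq> (f ` I) \<star> (f ` J)" by blast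
  show "(f ` I) \<star> (f ` J) \<subseteq> f ` (I \<star> J)"
  proof (rule frac_ideal_mult_subsetI)
    show "0 \<in> f ` (I \<star> J)" using zero zero_in_frac_ideal_mult by (metis image_eqI)
    show "u + v \<in> f ` (I \<star> J)" if "u \<in> f ` (I \<star> J)" "v \<in> f ` (I \<star> J)" for u v
      using that by (auto simp flip: add intro: frac_ideal_mult_add)
    show "x * y \<in> f ` (I \<star> J)" if "x \<in> f ` I" "y \<in> f ` J" for x y
      using that by (auto simp flip: mult intro: frac_ideal_mult_memI)
  qed
qed

lemma image_cnj_frac_ideal_mult: "cnj ` (I \<star> J) = (cnj ` I) \<star> (cnj ` J)"
  by (rule image_frac_ideal_mult) simp_all

lemma frac_ideal_mult_scale_left: "((*) s ` I) \<star> J = (*) s ` (I \<star> J)"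
proof
  show "((*) s ` I) \<star> J \<subseteq> (*) s ` (I \<star> J)"
  proof (rule frac_ideal_mult_subsetI)
    show "0 \<in> (*) s ` (I \<star> J)" using zero_in_frac_ideal_mult by (metis image_eqI mult_zero_right)
    show "u + v \<in> (*) s ` (I \<star> J)" if "u \<in> (*) s ` (I \<star> J)" "v \<in> (*) s ` (I \<star> J)" for u v
      using that by (auto simp flip: distrib_left intro: frac_ideal_mult_add)
    show "x * y \<in> (*) s ` (I \<star> J)" if "x \<in> (*) s ` I" "y \<in> J" for x y
      using that by (auto simp: mult.assoc intro: frac_ideal_mult_memI)
  qed
  have "I \<star> J \<subseteq> {z. s * z \<in> ((*) s ` I) \<star> J}"
    by (rule frac_ideal_mult_subsetI)
      (auto simp: zero_in_frac_ideal_mult distrib_left mult.assoc[symmetric]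
            intro: frac_ideal_mult_add frac_ideal_mult_memI)
  thus "(*) s ` (I \<star> J) \<subseteq> ((*) s ` I) \<star> J" by blast
qed

lemma frac_ideal_mult_scale_right: "I \<star> ((*) s ` J) = (*) s ` (I \<star> J)"
  using frac_ideal_mult_scale_left[of s J I] by (simp add: frac_ideal_mult_commute)

lemma frac_ideal_mult_times_cnj:
  "(I \<star> J) \<star> cnj ` (I \<star> J) = (I \<star> cnj ` I) \<star> (J \<star> cnj ` J)"
  by (simp add: image_cnj_frac_ideal_mult frac_ideal_mult_assoc frac_ideal_mult_left_commute[of J])

lemma image_mult_image_mult: "(*) a ` (*) b ` X = (*) (a * b) ` X"
  for a b :: "'a::semigroup_mult"
  by (simp add: image_image mult.assoc)

lemma scaled_frac_ideal_mult_cnj: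
  "((*) s ` J) \<star> cnj ` ((*) s ` J) = (*) (of_real (cmod s ^ 2)) ` (J \<star> cnj ` J)"
proof -
  have e: "cnj ` ((*) s ` J) = (*) (cnj s) ` (cnj ` J)" by (auto simp: image_image)
  have "((*) s ` J) \<star> cnj ` ((*) s ` J) = (*) (cnj s) ` ((*) s ` (J \<star> cnj ` J))"
    unfolding e frac_ideal_mult_scale_left frac_ideal_mult_scale_right ..
  also have "\<dots> = (*) (s * cnj s) ` (J \<star> cnj ` J)" by (simp add: image_image ac_simps)
  finally show ?thesis by (simp only: complex_norm_square)
qed

section \<open>The ring of integers of an imaginary quadratic field\<close>

lemma of_rat_complex: "(of_rat a :: complex) = of_real (of_rat a)"
  by (induct a) (simp add: of_rat_rat)

lemma algebraic_integer_of_trace_norm: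
  assumes "2 * Re z \<in> \<int>" "cmod z ^ 2 \<in> \<int>"
  shows "algebraic_integer z"
proof -
  obtain t n :: int where t: "2 * Re z = of_int t" and n: "cmod z ^ 2 = of_int n"
    using assms by (auto elim!: Ints_cases)
  have "poly (map_poly of_int [:n, -t, 1:]) z = of_int n - of_int t * z + z * z"
    by (simp add: map_poly_pCons algebra_simps)
  also have "\<dots> = 0"
  proof -
    have "real_of_int n = Re z * Re z + Im z * Im z" "real_of_int t = 2 * Re z"
      using t n cmod_power2[of z] by (simp_all add: power2_eq_square)
    thus ?thesis by (intro complex_eqI) (simp_all add: algebra_simps)
  qed
  finally show ?thesis unfolding algebraic_integer_def by (intro exI[of _ "[:n, -t, 1:]"]) simp
qed

lemma even_diff_if_4_dvd_diff_squares:
  fixes X Y :: int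
  assumes "4 dvd (X ^ 2 - Y ^ 2)"
  shows "2 dvd (X - Y)" "2 dvd (X + Y)"
proof -
  have "even (X ^ 2 - Y ^ 2)" using assms by (rule dvd_trans[rotated]) simp
  thus "2 dvd (X - Y)" by simp
  thus "2 dvd (X + Y)" by simp
qed

lemma nonzero_ideal_subset: "nonzero_ideal R A \<Longrightarrow> A \<subseteq> R"
  and nonzero_ideal_zero: "nonzero_ideal R A \<Longrightarrow> 0 \<in> A"
  and nonzero_ideal_add: "nonzero_ideal R A \<Longrightarrow> x \<in> A \<Longrightarrow> y \<in> A \<Longrightarrow> x + y \<in> A"
  and nonzero_ideal_mult: "nonzero_ideal R A \<Longrightarrow> r \<in> R \<Longrightarrow> x \<in> A \<Longrightarrow> r * x \<in> A"
  and nonzero_ideal_ex_nonzero: "nonzero_ideal R A \<Longrightarrow> \<exists>z\<in>A. z \<noteq> 0"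
  by (auto simp: nonzero_ideal_def)

definition int_span :: "'a::ring_1 \<Rightarrow> 'a \<Rightarrow> 'a set" where
  "int_span a b = {of_int x * a + of_int y * b | x y. True}"

lemma int_span_memI [intro, simp]: "of_int x * a + of_int y * b \<in> int_span a b"
  unfolding int_span_def by blast

lemma int_span_mem_left: "of_int x * a \<in> int_span a b"
  and int_span_mem_right: "of_int y * b \<in> int_span a b"
  and int_span_left: "a \<in> int_span a b"
  and int_span_right: "b \<in> int_span a b"
  using int_span_memI[of x a 0 b] int_span_memI[of 0 a y b] int_span_memI[of 1 a 0 b] int_span_memI[of 0 a 1 b]
  by simp_all

lemma image_cnj_int_span: "cnj ` int_span a b = int_span (cnj a) (cnj b)"
proof (intro equalityI subsetI)
  fix z assume "z \<in> cnj ` int_span a b"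
  then obtain x y where "z = cnj (of_int x * a + of_int y * b)" unfolding int_span_def by blast
  thus "z \<in> int_span (cnj a) (cnj b)" by simp
next
  fix z assume "z \<in> int_span (cnj a) (cnj b)"
  then obtain x y where "z = of_int x * cnj a + of_int y * cnj b" unfolding int_span_def by blast
  hence "z = cnj (of_int x * a + of_int y * b)" by simp
  thus "z \<in> cnj ` int_span a b" by blast
qed

lemma int_span_mult_subsetI:
  fixes a b a' b' :: complex
  assumes "0 \<in> S" and add: "\<And>x y. x \<in> S \<Longrightarrow> y \<in> S \<Longrightarrow> x + y \<in> S"
    and int_mult: "\<And>k x. x \<in> S \<Longrightarrow> of_int k * x \<in> S"
    and "a * a' \<in> S" "a * b' \<in> S" "b * a' \<in> S" "b * b' \<in> S"
  shows "int_span a b \<star> int_span a' b' \<subseteq> S"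
proof (rule frac_ideal_mult_subsetI)
  fix x y assume "x \<in> int_span a b" "y \<in> int_span a' b'"
  then obtain i j i' j' where x: "x = of_int i * a + of_int j * b" and y: "y = of_int i' * a' + of_int j' * b'"
    unfolding int_span_def by blast
  have "x * y = of_int (i * i') * (a * a') + of_int (i * j') * (a * b')
      + of_int (j * i') * (b * a') + of_int (j * j') * (b * b')"
    unfolding x y by (simp add: algebra_simps)
  thus "x * y \<in> S" using assms by (simp only: add int_mult)
qed (use assms in auto)

locale imag_quadratic_field =
  fixes d :: nat
  assumes d_pos: "d > 0"
begin

abbreviation sqrt_d :: real where "sqrt_d \<equiv> sqrt (real d)"
abbreviation K :: "complex set" where "K \<equiv> quad_field d"
abbreviation \<O> :: "complex set" where "\<O> \<equiv> ring_of_integers (quad_field d)"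

definition \<theta> :: complex where "\<theta> = \<i> * of_real sqrt_d"

lemma sqrt_d_pos: "sqrt_d > 0"
  using d_pos by simp

lemma Re_\<theta> [simp]: "Re \<theta> = 0" and Im_\<theta> [simp]: "Im \<theta> = sqrt_d"
  by (simp_all add: \<theta>_def)

lemma Im_mult_Im: "Im z * Im w = real d * (Im z / sqrt_d) * (Im w / sqrt_d)"
proof -
  have "real d * (Im z / sqrt_d) * (Im w / sqrt_d) = (sqrt_d * sqrt_d) * (Im z * Im w) / (sqrt_d * sqrt_d)"
    by simp
  thus ?thesis using sqrt_d_pos by simp
qed

lemma norm_square_eq: "cmod z ^ 2 = Re z * Re z + real d * (Im z / sqrt_d) * (Im z / sqrt_d)"
proof -
  have "cmod z ^ 2 = Re z * Re z + Im z * Im z" using cmod_power2[of z] by (simp add: power2_eq_square)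
  thus ?thesis by (simp only: Im_mult_Im)
qed

lemma quad_field_iff: "z \<in> K \<longleftrightarrow> Re z \<in> \<rat> \<and> Im z / sqrt_d \<in> \<rat>"
proof
  assume "z \<in> K"
  then obtain a b where z: "z = of_rat a + of_rat b * \<theta>" by (auto simp: quad_field_def \<theta>_def)
  have "Re z = of_rat a" "Im z / sqrt_d = of_rat b"
    using sqrt_d_pos by (simp_all add: z of_rat_complex)
  thus "Re z \<in> \<rat> \<and> Im z / sqrt_d \<in> \<rat>" by simp
next
  assume "Re z \<in> \<rat> \<and> Im z / sqrt_d \<in> \<rat>"
  then obtain a b where a: "Re z = of_rat a" and b: "Im z / sqrt_d = of_rat b"
    by (auto elim!: Rats_cases)
  have "z = of_rat a + of_rat b * \<theta>"
    using sqrt_d_pos a b by (intro complex_eqI) (simp_all add: of_rat_complex field_simps)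
  thus "z \<in> K" by (auto simp: quad_field_def \<theta>_def)
qed

lemma quad_field_add: "z \<in> K \<Longrightarrow> w \<in> K \<Longrightarrow> z + w \<in> K"
  by (simp add: quad_field_iff add_divide_distrib)

lemma quad_field_cnj: "z \<in> K \<Longrightarrow> cnj z \<in> K"
  by (simp add: quad_field_iff)

lemma quad_field_mult: "z \<in> K \<Longrightarrow> w \<in> K \<Longrightarrow> z * w \<in> K"
proof -
  assume z: "z \<in> K" and w: "w \<in> K"
  have "Re (z * w) = Re z * Re w - Im z * Im w" by simp
  hence Re: "Re (z * w) = Re z * Re w - real d * (Im z / sqrt_d) * (Im w / sqrt_d)"
    by (simp only: Im_mult_Im)
  have Im: "Im (z * w) / sqrt_d = Re z * (Im w / sqrt_d) + (Im z / sqrt_d) * Re w"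
    by (simp add: add_divide_distrib)
  have "Re (z * w) \<in> \<rat>" "Im (z * w) / sqrt_d \<in> \<rat>"
    unfolding Re Im using z w unfolding quad_field_iff by (intro Rats_diff Rats_add Rats_mult; simp)+
  thus ?thesis unfolding quad_field_iff by blast
qed

lemma quad_field_norm_square: "z \<in> K \<Longrightarrow> cmod z ^ 2 \<in> \<rat>"
  unfolding norm_square_eq quad_field_iff by (intro Rats_add Rats_mult; simp)

lemma quad_field_of_real: "x \<in> \<rat> \<Longrightarrow> of_real x \<in> K"
  by (simp add: quad_field_iff)

lemma quad_field_of_int [simp]: "of_int k \<in> K"
  by (simp add: quad_field_iff)

lemma quad_field_inverse: "z \<in> K \<Longrightarrow> inverse z \<in> K"
proof -
  assume z: "z \<in> K"
  have "inverse z = cnj z * of_real (inverse (cmod z ^ 2))"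
    using complex_div_cnj[of 1 z] by (simp add: divide_inverse)
  moreover have "of_real (inverse (cmod z ^ 2)) \<in> K"
    using quad_field_norm_square[OF z] by (intro quad_field_of_real) simp
  ultimately show ?thesis using quad_field_cnj[OF z] quad_field_mult by simp
qed

lemma quad_field_power: "z \<in> K \<Longrightarrow> z ^ k \<in> K"
  using quad_field_of_int[of 1] by (induction k) (simp_all add: quad_field_mult)

lemma \<theta>_in_quad_field: "\<theta> \<in> K"
  using sqrt_d_pos by (simp add: quad_field_iff)

definition int_coords :: "complex \<Rightarrow> bool" where
  "int_coords z \<longleftrightarrow> Re z \<in> \<int> \<and> Im z / sqrt_d \<in> \<int>"

lemma int_coords_add: "int_coords z \<Longrightarrow> int_coords w \<Longrightarrow> int_coords (z + w)"
  by (simp add: int_coords_def add_divide_distrib)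

lemma int_coords_int_mult: "int_coords z \<Longrightarrow> int_coords (of_int k * z)"
proof -
  have "Re (of_int k * z) = of_int k * Re z" "Im (of_int k * z) / sqrt_d = of_int k * (Im z / sqrt_d)"
    by simp_all
  thus "int_coords z \<Longrightarrow> int_coords (of_int k * z)" unfolding int_coords_def
    by (simp only:) (intro conjI Ints_mult; simp)
qed

lemma int_coords_sum: "(\<And>i. i \<in> A \<Longrightarrow> int_coords (f i)) \<Longrightarrow> int_coords (sum f A)"
proof (induction A rule: infinite_finite_induct)
  case (insert x F) thus ?case by (simp add: int_coords_add)
qed (simp_all add: int_coords_def)

lemma int_coords_norm_square: "int_coords z \<Longrightarrow> cmod z ^ 2 \<in> \<int>"
proof -
  assume "int_coords z"
  thus ?thesis unfolding norm_square_eq int_coords_def by (intro Ints_add Ints_mult; simp)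
qed

lemma quad_field_ex_denominator: "z \<in> K \<Longrightarrow> \<exists>D::int. D > 0 \<and> int_coords (of_int D * z)"
proof -
  assume z: "z \<in> K"
  obtain D1 :: int where D1: "D1 > 0" "of_int D1 * Re z \<in> \<int>"
    using Rats_ex_denominator z unfolding quad_field_iff by blast
  obtain D2 :: int where D2: "D2 > 0" "of_int D2 * (Im z / sqrt_d) \<in> \<int>"
    using Rats_ex_denominator z unfolding quad_field_iff by blast
  have "Re (of_int (D1 * D2) * z) = of_int D2 * (of_int D1 * Re z)"
    and "Im (of_int (D1 * D2) * z) / sqrt_d = of_int D1 * (of_int D2 * (Im z / sqrt_d))" by simp_all
  hence "int_coords (of_int (D1 * D2) * z)"
    unfolding int_coords_def using D1 D2 by (metis Ints_mult Ints_of_int)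
  thus ?thesis using D1 D2 by (intro exI[of _ "D1 * D2"]) simp
qed

lemma quad_field_ex_common_denominator:
  "finite F \<Longrightarrow> F \<subseteq> K \<Longrightarrow> \<exists>D::int. D > 0 \<and> (\<forall>z\<in>F. int_coords (of_int D * z))"
proof (induction F rule: finite_induct)
  case empty thus ?case by (intro exI[of _ 1]) simp
next
  case (insert x F)
  then obtain D where D: "D > 0" "\<forall>z\<in>F. int_coords (of_int D * z)" by auto
  obtain Dx where Dx: "Dx > 0" "int_coords (of_int Dx * x)"
    using insert.prems quad_field_ex_denominator by blast
  have "int_coords (of_int (D * Dx) * z)" if "z \<in> insert x F" for z
    using that int_coords_int_mult[OF Dx(2), of D] int_coords_int_mult[of "of_int D * z" Dx] D(2)
    by (auto simp: ac_simps)
  thus ?case using D Dx by (intro exI[of _ "D * Dx"]) simp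
qed

lemma algebraic_integer_powers_common_denominator:
  assumes u: "u \<in> K" and "algebraic_integer u"
  shows "\<exists>D::int. D > 0 \<and> (\<forall>k. int_coords (of_int D * u ^ k))"
proof -
  obtain p :: "int poly" where lc: "lead_coeff p = 1" and root: "poly (map_poly of_int p) u = 0"
    using assms(2) unfolding algebraic_integer_def by blast
  obtain D where D: "D > 0" "\<And>i. i < degree p \<Longrightarrow> int_coords (of_int D * u ^ i)"
    using quad_field_ex_common_denominator[of "(\<lambda>i. u ^ i) ` {..<degree p}"] quad_field_power[OF u]
    by auto
  have "int_coords (of_int D * u ^ k)" for k
  proof -
    obtain c where c: "u ^ k = (\<Sum>i<degree p. of_int (c i) * u ^ i)"
      using monic_root_power_eq_int_combination[OF lc root] by blast
    have "of_int D * u ^ k = (\<Sum>i<degree p. of_int (c i) * (of_int D * u ^ i))"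
      unfolding c by (simp add: sum_distrib_left mult.left_commute)
    moreover have "int_coords (\<Sum>i<degree p. of_int (c i) * (of_int D * u ^ i))"
      by (intro int_coords_sum int_coords_int_mult D(2)) simp
    ultimately show ?thesis by simp
  qed
  thus ?thesis using D by blast
qed

lemma norm_square_Ints_if_powers_bounded_denominator:
  assumes w: "w \<in> K" and D: "D > 0" and h: "\<And>k. int_coords (of_int D * w ^ k)"
  shows "cmod w ^ 2 \<in> \<int>"
proof (rule Ints_of_Rats_bounded_denominator[of _ "D * D"])
  show "cmod w ^ 2 \<in> \<rat>" using quad_field_norm_square[OF w] .
  show "D * D > 0" using D by simp
  fix k
  have "of_int (D * D) * (cmod w ^ 2) ^ k = cmod (of_int D * w ^ k) ^ 2"
    by (simp add: norm_mult norm_power power_mult_distrib flip: power_mult)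
      (simp add: mult.commute power2_eq_square)
  thus "of_int (D * D) * (cmod w ^ 2) ^ k \<in> \<int>" using int_coords_norm_square[OF h[of k]] by simp
qed

lemma ring_of_integers_trace_norm:
  assumes "z \<in> \<O>"
  shows "2 * Re z \<in> \<int>" "cmod z ^ 2 \<in> \<int>"
proof -
  have z: "z \<in> K" and a: "algebraic_integer z" using assms by (auto simp: ring_of_integers_def)
  obtain D where D: "D > 0" "\<And>k. int_coords (of_int D * z ^ k)"
    using algebraic_integer_powers_common_denominator[OF z a] by blast
  show n: "cmod z ^ 2 \<in> \<int>" using norm_square_Ints_if_powers_bounded_denominator[OF z D] .
  have "int_coords (of_int D * (z + 1) ^ k)" for k
  proof -
    have "of_int D * (z + 1) ^ k = (\<Sum>j\<le>k. of_int (int (k choose j)) * (of_int D * z ^ j))"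
      by (simp add: binomial_ring sum_distrib_left mult.left_commute)
    moreover have "int_coords (\<Sum>j\<le>k. of_int (int (k choose j)) * (of_int D * z ^ j))"
      by (intro int_coords_sum int_coords_int_mult D(2))
    ultimately show ?thesis by simp
  qed
  moreover have "z + 1 \<in> K" using quad_field_add[OF z quad_field_of_int[of 1]] by simp
  ultimately have "cmod (z + 1) ^ 2 \<in> \<int>"
    using norm_square_Ints_if_powers_bounded_denominator[OF _ D(1)] by blast
  moreover have "2 * Re z = cmod (z + 1) ^ 2 - cmod z ^ 2 - 1"
    unfolding cmod_power2 by (simp add: power2_eq_square algebra_simps)
  ultimately show "2 * Re z \<in> \<int>" using n by simp
qed

lemma ring_of_integers_iff: "z \<in> \<O> \<longleftrightarrow> z \<in> K \<and> 2 * Re z \<in> \<int> \<and> cmod z ^ 2 \<in> \<int>"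
  using ring_of_integers_trace_norm algebraic_integer_of_trace_norm
  by (auto simp: ring_of_integers_def)

lemma ring_of_integers_in_quad_field: "z \<in> \<O> \<Longrightarrow> z \<in> K"
  by (simp add: ring_of_integers_iff)

lemma ring_of_integers_of_int [simp]: "of_int k \<in> \<O>"
proof -
  have "cmod (of_int k) ^ 2 = of_int (k ^ 2)" by simp
  hence "cmod (of_int k) ^ 2 \<in> \<int>" by (metis Ints_of_int)
  thus ?thesis by (simp add: ring_of_integers_iff)
qed

lemma ring_of_integers_zero [simp]: "0 \<in> \<O>" and ring_of_integers_one [simp]: "1 \<in> \<O>"
  using ring_of_integers_of_int[of 0] ring_of_integers_of_int[of 1] by simp_all

lemma ring_of_integers_cnj: "z \<in> \<O> \<Longrightarrow> cnj z \<in> \<O>"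
  by (simp add: ring_of_integers_iff quad_field_cnj)

lemma ring_of_integers_cross_terms:
  assumes u: "u \<in> \<O>" and v: "v \<in> \<O>"
  shows "\<exists>a b :: int. (2 * Re u) * (2 * Re v) - (2 * Im u) * (2 * Im v) = 2 * of_int a \<and>
                    (2 * Re u) * (2 * Re v) + (2 * Im u) * (2 * Im v) = 2 * of_int b"
proof -
  obtain tu nu :: int where tu: "2 * Re u = of_int tu" and nu: "cmod u ^ 2 = of_int nu"
    using u by (auto simp: ring_of_integers_iff elim!: Ints_cases)
  obtain tv nv :: int where tv: "2 * Re v = of_int tv" and nv: "cmod v ^ 2 = of_int nv"
    using v by (auto simp: ring_of_integers_iff elim!: Ints_cases)
  have eu: "(2 * Im u) ^ 2 = 4 * of_int nu - of_int tu ^ 2"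
    using nu unfolding cmod_power2 by (simp add: power2_eq_square algebra_simps flip: tu)
  have ev: "(2 * Im v) ^ 2 = 4 * of_int nv - of_int tv ^ 2"
    using nv unfolding cmod_power2 by (simp add: power2_eq_square algebra_simps flip: tv)
  \<comment> \<open>the cross term \<open>4 Im u Im v\<close> is rational with integral square, hence integral\<close>
  have cross: "(2 * Im u) * (2 * Im v) = 4 * (real d * (Im u / sqrt_d) * (Im v / sqrt_d))"
    by (simp only: Im_mult_Im[symmetric])
  have "(2 * Im u) * (2 * Im v) \<in> \<rat>"
    using u v unfolding cross ring_of_integers_iff quad_field_iff by (intro Rats_mult) auto
  moreover have sq: "((2 * Im u) * (2 * Im v)) ^ 2 = of_int ((4 * nu - tu ^ 2) * (4 * nv - tv ^ 2))"
  proof -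
    have "((2 * Im u) * (2 * Im v)) ^ 2 = (2 * Im u) ^ 2 * (2 * Im v) ^ 2" by (rule power_mult_distrib)
    also have "\<dots> = of_int ((4 * nu - tu ^ 2) * (4 * nv - tv ^ 2))" unfolding eu ev by simp
    finally show ?thesis .
  qed
  ultimately have "(2 * Im u) * (2 * Im v) \<in> \<int>"
    by (metis Ints_of_Rats_power2 Ints_of_int)
  then obtain y :: int where y: "(2 * Im u) * (2 * Im v) = of_int y" by (auto elim!: Ints_cases)
  have "real_of_int (y ^ 2) = of_int ((4 * nu - tu ^ 2) * (4 * nv - tv ^ 2))" using sq unfolding y by simp
  hence "y ^ 2 = (4 * nu - tu ^ 2) * (4 * nv - tv ^ 2)" by (simp only: of_int_eq_iff)
  hence "(tu * tv) ^ 2 - y ^ 2 = 4 * (nu * tv ^ 2 + nv * tu ^ 2 - 4 * nu * nv)"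
    by (simp add: power2_eq_square algebra_simps)
  hence d4: "4 dvd ((tu * tv) ^ 2 - y ^ 2)" by simp
  obtain a where "tu * tv - y = 2 * a" using even_diff_if_4_dvd_diff_squares(1)[OF d4] by blast
  moreover obtain b where "tu * tv + y = 2 * b" using even_diff_if_4_dvd_diff_squares(2)[OF d4] by blast
  ultimately show ?thesis unfolding tu tv y by (metis of_int_add of_int_diff of_int_mult of_int_numeral)
qed

lemma ring_of_integers_add_mult:
  assumes u: "u \<in> \<O>" and v: "v \<in> \<O>"
  shows "u + v \<in> \<O>" "u * v \<in> \<O>"
proof -
  have uK: "u \<in> K" and vK: "v \<in> K" using u v by (simp_all add: ring_of_integers_iff)
  obtain a b :: int where a: "(2 * Re u) * (2 * Re v) - (2 * Im u) * (2 * Im v) = 2 * of_int a"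
    and b: "(2 * Re u) * (2 * Re v) + (2 * Im u) * (2 * Im v) = 2 * of_int b"
    using ring_of_integers_cross_terms[OF u v] by blast
  have "2 * Re (u * v) = of_int a" using a by (simp add: algebra_simps)
  moreover have "cmod (u * v) ^ 2 = cmod u ^ 2 * cmod v ^ 2" by (simp add: norm_mult power_mult_distrib)
  ultimately show "u * v \<in> \<O>"
    using u v quad_field_mult[OF uK vK] by (simp add: ring_of_integers_iff)
  have "cmod (u + v) ^ 2 = cmod u ^ 2 + cmod v ^ 2 + ((2 * Re u) * (2 * Re v) + (2 * Im u) * (2 * Im v)) / 2"
    unfolding cmod_power2 by (simp add: power2_eq_square algebra_simps)
  hence "cmod (u + v) ^ 2 = cmod u ^ 2 + cmod v ^ 2 + of_int b" unfolding b by simp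
  moreover have "2 * Re (u + v) = 2 * Re u + 2 * Re v" by simp
  ultimately show "u + v \<in> \<O>"
    using u v quad_field_add[OF uK vK] by (simp add: ring_of_integers_iff)
qed

lemma ring_of_integers_add: "u \<in> \<O> \<Longrightarrow> v \<in> \<O> \<Longrightarrow> u + v \<in> \<O>"
  and ring_of_integers_mult: "u \<in> \<O> \<Longrightarrow> v \<in> \<O> \<Longrightarrow> u * v \<in> \<O>"
  using ring_of_integers_add_mult by blast+

lemma ring_of_integers_diff: "u \<in> \<O> \<Longrightarrow> v \<in> \<O> \<Longrightarrow> u - v \<in> \<O>"
proof -
  assume u: "u \<in> \<O>" and v: "v \<in> \<O>"
  have "of_int (-1) * v \<in> \<O>" using ring_of_integers_mult[OF ring_of_integers_of_int v] .
  thus ?thesis using ring_of_integers_add[OF u, of "- v"] by simp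
qed

lemma \<theta>_in_ring_of_integers: "\<theta> \<in> \<O>"
proof -
  have "cmod \<theta> ^ 2 = of_int (int d)" by (simp add: cmod_power2)
  thus ?thesis using \<theta>_in_quad_field by (simp add: ring_of_integers_iff)
qed

lemma ring_of_integers_real:
  assumes z: "z \<in> \<O>" and "Im z = 0"
  shows "\<exists>k. z = of_int k"
proof -
  have "Re z \<in> \<rat>" using z by (simp add: ring_of_integers_iff quad_field_iff)
  moreover have "Re z ^ 2 \<in> \<int>" using z assms(2) by (simp add: ring_of_integers_iff cmod_power2)
  ultimately have "Re z \<in> \<int>" by (rule Ints_of_Rats_power2)
  then obtain k where "Re z = of_int k" by (auto elim: Ints_cases)
  hence "z = of_int k" using assms(2) by (intro complex_eqI) simp_all
  thus ?thesis by blast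
qed

lemma ring_of_integers_Im_square: "z \<in> \<O> \<Longrightarrow> \<exists>k::nat. 4 * Im z ^ 2 = of_nat k"
proof -
  assume z: "z \<in> \<O>"
  have "4 * Im z ^ 2 = 4 * cmod z ^ 2 - (2 * Re z) ^ 2"
    unfolding cmod_power2 by (simp add: power2_eq_square)
  also have "\<dots> \<in> \<int>"
    using z Ints_power[of "2 * Re z" 2] unfolding ring_of_integers_iff by (intro Ints_diff Ints_mult) auto
  finally obtain k where k: "4 * Im z ^ 2 = of_int k" by (auto elim: Ints_cases)
  hence "k \<ge> 0" by (metis of_int_0_le_iff zero_le_power2 mult_nonneg_nonneg zero_le_numeral)
  thus ?thesis using k by (intro exI[of _ "nat k"]) simp
qed

text \<open>The lattice \<open>\<O>\<close> has a basis \<open>1, \<omega>\<close> with \<open>\<omega>\<close> of least positive imaginary part;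
  such an \<open>\<omega>\<close> exists because \<open>4 (Im z)\<^sup>2\<close> is a natural number for \<open>z \<in> \<O>\<close>.\<close>

lemma ex_least_positive_Im: "\<exists>w. w \<in> \<O> \<and> Im w > 0 \<and> (\<forall>z\<in>\<O>. Im z > 0 \<longrightarrow> Im w \<le> Im z)"
proof -
  define P where "P k \<longleftrightarrow> (\<exists>z\<in>\<O>. Im z > 0 \<and> 4 * Im z ^ 2 = of_nat k)" for k :: nat
  have "P (4 * d)" unfolding P_def using \<theta>_in_ring_of_integers sqrt_d_pos by (intro bexI[of _ \<theta>]) auto
  hence "P (LEAST k. P k)" by (rule LeastI)
  then obtain w where w: "w \<in> \<O>" "Im w > 0" "4 * Im w ^ 2 = of_nat (LEAST k. P k)"
    unfolding P_def by blast
  have "Im w \<le> Im z" if z: "z \<in> \<O>" "Im z > 0" for z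
  proof -
    obtain k where k: "4 * Im z ^ 2 = of_nat k" using ring_of_integers_Im_square[OF z(1)] by blast
    hence "P k" unfolding P_def using z by blast
    hence "(LEAST k. P k) \<le> k" by (rule Least_le)
    hence "Im w ^ 2 \<le> Im z ^ 2" using w(3) k by linarith
    thus ?thesis using w(2) z(2) by (simp add: power2_le_iff_abs_le abs_of_pos)
  qed
  thus ?thesis using w by blast
qed

definition \<omega> :: complex where
  "\<omega> = (SOME w. w \<in> \<O> \<and> Im w > 0 \<and> (\<forall>z\<in>\<O>. Im z > 0 \<longrightarrow> Im w \<le> Im z))"

lemma \<omega>_in_ring_of_integers: "\<omega> \<in> \<O>"
  and Im_\<omega>_pos: "Im \<omega> > 0"
  and Im_\<omega>_le: "z \<in> \<O> \<Longrightarrow> Im z > 0 \<Longrightarrow> Im \<omega> \<le> Im z"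
  using someI_ex[OF ex_least_positive_Im] unfolding \<omega>_def[symmetric] by blast+

lemma ring_of_integers_basis: "z \<in> \<O> \<longleftrightarrow> (\<exists>m n::int. z = of_int m + of_int n * \<omega>)"
proof
  assume z: "z \<in> \<O>"
  define n where "n = \<lfloor>Im z / Im \<omega>\<rfloor>"
  define v where "v = z - of_int n * \<omega>"
  have v: "v \<in> \<O>"
    unfolding v_def using z \<omega>_in_ring_of_integers by (intro ring_of_integers_diff ring_of_integers_mult) simp_all
  have "of_int n \<le> Im z / Im \<omega>" "Im z / Im \<omega> < of_int n + 1" unfolding n_def by linarith+
  hence "of_int n * Im \<omega> \<le> Im z" "Im z < (of_int n + 1) * Im \<omega>"
    using Im_\<omega>_pos by (simp_all add: field_simps)
  hence "0 \<le> Im v" "Im v < Im \<omega>" unfolding v_def by (simp_all add: algebra_simps)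
  hence "Im v = 0" using Im_\<omega>_le[OF v] by force
  then obtain m where "v = of_int m" using ring_of_integers_real[OF v] by blast
  hence "z = of_int m + of_int n * \<omega>" unfolding v_def by (simp add: algebra_simps)
  thus "\<exists>m n::int. z = of_int m + of_int n * \<omega>" by blast
next
  assume "\<exists>m n::int. z = of_int m + of_int n * \<omega>"
  then obtain m n :: int where "z = of_int m + of_int n * \<omega>" by blast
  thus "z \<in> \<O>"
    by (simp add: ring_of_integers_add ring_of_integers_mult \<omega>_in_ring_of_integers)
qed

lemma basis_coeffs_unique:
  assumes "of_int m + of_int n * \<omega> = of_int m' + of_int n' * \<omega>"
  shows "m = m'" "n = n'"
proof -
  have "Im (of_int m + of_int n * \<omega>) = Im (of_int m' + of_int n' * \<omega>)" using assms by simp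
  thus nn: "n = n'" using Im_\<omega>_pos by simp
  show "m = m'" using assms unfolding nn by simp
qed

definition tr\<omega> :: int where "tr\<omega> = \<lfloor>2 * Re \<omega>\<rfloor>"
definition nm\<omega> :: int where "nm\<omega> = \<lfloor>cmod \<omega> ^ 2\<rfloor>"

lemma tr\<omega>: "2 * Re \<omega> = of_int tr\<omega>" and nm\<omega>: "cmod \<omega> ^ 2 = of_int nm\<omega>"
  using \<omega>_in_ring_of_integers unfolding tr\<omega>_def nm\<omega>_def ring_of_integers_iff by (auto elim!: Ints_cases)

lemma cnj_\<omega>: "cnj \<omega> = of_int tr\<omega> - \<omega>"
  using tr\<omega> by (intro complex_eqI) simp_all

lemma \<omega>_square: "\<omega> * \<omega> = of_int tr\<omega> * \<omega> - of_int nm\<omega>"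
proof -
  have "\<omega> * cnj \<omega> = of_int nm\<omega>" using nm\<omega> complex_norm_square[of \<omega>] by simp
  thus ?thesis unfolding cnj_\<omega> by (simp add: algebra_simps)
qed

section \<open>Ideals of \<open>\<O>\<^sub>K\<close> as lattices\<close>

lemma ideal_int_mult: "nonzero_ideal \<O> A \<Longrightarrow> x \<in> A \<Longrightarrow> of_int k * x \<in> A"
  using nonzero_ideal_mult[of \<O> A "of_int k" x] by simp

lemma ideal_diff: "nonzero_ideal \<O> A \<Longrightarrow> x \<in> A \<Longrightarrow> y \<in> A \<Longrightarrow> x - y \<in> A"
  using nonzero_ideal_add[of \<O> A x "of_int (-1) * y"] ideal_int_mult[of A y "-1"] by simp

lemma ideal_coset_eq_iff:
  assumes A: "nonzero_ideal \<O> A"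
  shows "(\<lambda>c. x + c) ` A = (\<lambda>c. y + c) ` A \<longleftrightarrow> x - y \<in> A"
proof
  assume e: "(\<lambda>c. x + c) ` A = (\<lambda>c. y + c) ` A"
  have "x \<in> (\<lambda>c. x + c) ` A" using nonzero_ideal_zero[OF A] by force
  then obtain c where "c \<in> A" "x = y + c" using e by auto
  thus "x - y \<in> A" by simp
next
  assume h: "x - y \<in> A"
  have "x + c \<in> (\<lambda>c. y + c) ` A" if "c \<in> A" for c
    using nonzero_ideal_add[OF A h that] by (intro image_eqI[of _ _ "x - y + c"]) simp_all
  moreover have "y + c \<in> (\<lambda>c. x + c) ` A" if "c \<in> A" for c
    using ideal_diff[OF A that h] by (intro image_eqI[of _ _ "c - (x - y)"]) simp_all
  ultimately show "(\<lambda>c. x + c) ` A = (\<lambda>c. y + c) ` A" by blast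
qed

lemma ideal_basis_coords_add:
  assumes A: "nonzero_ideal \<O> A"
    and "of_int x1 + of_int y1 * \<omega> \<in> A" "of_int x2 + of_int y2 * \<omega> \<in> A"
  shows "of_int (x1 + x2) + of_int (y1 + y2) * \<omega> \<in> A"
proof -
  have "of_int x1 + of_int y1 * \<omega> + (of_int x2 + of_int y2 * \<omega>) \<in> A"
    using nonzero_ideal_add[OF A assms(2,3)] .
  thus ?thesis by (simp add: algebra_simps)
qed

lemma ideal_basis_coords_int_mult:
  assumes A: "nonzero_ideal \<O> A" and "of_int x + of_int y * \<omega> \<in> A"
  shows "of_int (n * x) + of_int (n * y) * \<omega> \<in> A"
proof -
  have "of_int n * (of_int x + of_int y * \<omega>) \<in> A" using ideal_int_mult[OF A assms(2)] .
  thus ?thesis by (simp add: algebra_simps)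
qed

lemma ideal_eq_int_span:
  assumes A: "nonzero_ideal \<O> A"
  obtains a b c :: int where "a > 0" "c > 0" "A = int_span (of_int a) (of_int b + of_int c * \<omega>)"
proof -
  obtain z0 where z0: "z0 \<in> A" "z0 \<noteq> 0" using nonzero_ideal_ex_nonzero[OF A] by blast
  have "z0 \<in> \<O>" using z0(1) nonzero_ideal_subset[OF A] by blast
  then obtain n0 :: int where n0: "cmod z0 ^ 2 = of_int n0"
    using ring_of_integers_trace_norm(2) by (auto elim!: Ints_cases)
  have "cnj z0 * z0 \<in> A" using nonzero_ideal_mult[OF A ring_of_integers_cnj[OF \<open>z0 \<in> \<O>\<close>] z0(1)] .
  hence n0A: "of_int n0 \<in> A" using n0 complex_norm_square[of z0] by (simp add: mult.commute)
  have "n0 > 0" using n0 z0(2) by (metis of_int_0_less_iff zero_less_norm_iff zero_less_power)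
  obtain a where a: "a > 0" "of_int a \<in> A" and a_dvd: "\<And>k. of_int k \<in> A \<Longrightarrow> a dvd k"
  proof (rule int_set_ex_generator[of "{k. of_int k \<in> A}" n0])
    show "x + y \<in> {k. of_int k \<in> A}" if "x \<in> {k. of_int k \<in> A}" "y \<in> {k. of_int k \<in> A}" for x y
      using that nonzero_ideal_add[OF A] by simp
    show "n * x \<in> {k. of_int k \<in> A}" if "x \<in> {k. of_int k \<in> A}" for n x
      using that ideal_int_mult[OF A] by simp
  qed (use n0A \<open>n0 > 0\<close> that in simp_all)
  have a\<omega>: "of_int 0 + of_int a * \<omega> \<in> A"
    using nonzero_ideal_mult[OF A \<omega>_in_ring_of_integers a(2)] by (simp add: mult.commute)
  obtain c where c: "c > 0" "\<exists>b. of_int b + of_int c * \<omega> \<in> A"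
    and c_dvd: "\<And>x y. of_int x + of_int y * \<omega> \<in> A \<Longrightarrow> c dvd y"
  proof (rule int_set_ex_generator[of "{y. \<exists>x. of_int x + of_int y * \<omega> \<in> A}" a])
    show "y1 + y2 \<in> {y. \<exists>x. of_int x + of_int y * \<omega> \<in> A}"
      if "y1 \<in> {y. \<exists>x. of_int x + of_int y * \<omega> \<in> A}" "y2 \<in> {y. \<exists>x. of_int x + of_int y * \<omega> \<in> A}"
      for y1 y2
      using that ideal_basis_coords_add[OF A] by blast
    show "n * y1 \<in> {y. \<exists>x. of_int x + of_int y * \<omega> \<in> A}"
      if "y1 \<in> {y. \<exists>x. of_int x + of_int y * \<omega> \<in> A}" for n y1
      using that ideal_basis_coords_int_mult[OF A] by blast
  qed (use a\<omega> a(1) that in blast)+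
  then obtain b where g: "of_int b + of_int c * \<omega> \<in> A" by blast
  define g where "g = of_int b + of_int c * \<omega>"
  have "z \<in> int_span (of_int a) g" if z: "z \<in> A" for z
  proof -
    obtain m' n' where mn: "z = of_int m' + of_int n' * \<omega>"
      using z nonzero_ideal_subset[OF A] ring_of_integers_basis by blast
    obtain q where q: "n' = c * q" using c_dvd z unfolding mn by blast
    have "z - of_int q * g = of_int (m' - q * b)"
      unfolding mn g_def q by (simp add: algebra_simps)
    moreover have "z - of_int q * g \<in> A" using ideal_diff[OF A z ideal_int_mult[OF A g[folded g_def]]] .
    ultimately obtain p where "m' - q * b = a * p" using a_dvd by (metis dvdE)
    hence "z = of_int p * of_int a + of_int q * g"
      using \<open>z - of_int q * g = of_int (m' - q * b)\<close> by (simp add: algebra_simps)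
    thus ?thesis by simp
  qed
  moreover have "int_span (of_int a) g \<subseteq> A"
    unfolding int_span_def g_def
    using nonzero_ideal_add[OF A ideal_int_mult[OF A a(2)] ideal_int_mult[OF A g]] by auto
  ultimately show ?thesis using that a(1) c unfolding g_def by blast
qed

lemma mem_int_span_basis_iff:
  "of_int m + of_int n * \<omega> \<in> int_span (of_int a) (of_int b + of_int c * \<omega>) \<longleftrightarrow>
   (\<exists>x y. m = x * a + y * b \<and> n = y * c)"
proof -
  have e: "of_int x * of_int a + of_int y * (of_int b + of_int c * \<omega>) =
      of_int (x * a + y * b) + of_int (y * c) * \<omega>" for x y
    by (simp add: algebra_simps)
  show ?thesis unfolding int_span_def mem_Collect_eq e by (blast dest: basis_coeffs_unique)
qed

lemma ideal_norm_int_span: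
  assumes A: "nonzero_ideal \<O> A" and a: "a > 0" and c: "c > 0"
    and A_eq: "A = int_span (of_int a) (of_int b + of_int c * \<omega>)"
  shows "ideal_norm \<O> A = nat (a * c)"
proof -
  define coset where "coset x = (\<lambda>c. x + c) ` A" for x
  define rep :: "int \<times> int \<Rightarrow> complex" where "rep = (\<lambda>(i, j). of_int i + of_int j * \<omega>)"
  define box where "box = {0..<a} \<times> {0..<c}"
  have rep_diff: "rep p - rep q \<in> A \<longleftrightarrow>
      (\<exists>x y. fst p - fst q = x * a + y * b \<and> snd p - snd q = y * c)" for p q
  proof -
    have "rep p - rep q = of_int (fst p - fst q) + of_int (snd p - snd q) * \<omega>"
      by (simp add: rep_def case_prod_beta algebra_simps)
    thus ?thesis unfolding A_eq by (simp only: mem_int_span_basis_iff)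
  qed
  have "coset ` \<O> \<subseteq> coset ` rep ` box"
  proof
    fix u assume "u \<in> coset ` \<O>"
    then obtain z where z: "z \<in> \<O>" "u = coset z" by blast
    obtain m n where mn: "z = rep (m, n)" using z(1) ring_of_integers_basis by (auto simp: rep_def)
    define q where "q = n div c"
    define p where "p = (m - q * b) div a"
    define ij where "ij = ((m - q * b) mod a, n mod c)"
    have "ij \<in> box" using a c by (simp add: box_def ij_def)
    moreover have "rep (m, n) - rep ij \<in> A"
      unfolding rep_diff ij_def
      using div_mult_mod_eq[of "m - q * b" a] div_mult_mod_eq[of n c]
      by (intro exI[of _ p] exI[of _ q]) (simp add: p_def q_def algebra_simps)
    ultimately show "u \<in> coset ` rep ` box"
      using ideal_coset_eq_iff[OF A] z(2) mn by (auto simp: coset_def)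
  qed
  moreover have "rep ` box \<subseteq> \<O>" using ring_of_integers_basis by (auto simp: rep_def)
  ultimately have "coset ` \<O> = coset ` rep ` box" by blast
  moreover have "inj_on coset (rep ` box)"
  proof (rule inj_onI)
    fix u v assume "u \<in> rep ` box" "v \<in> rep ` box" "coset u = coset v"
    then obtain p q where pq: "p \<in> box" "q \<in> box" "u = rep p" "v = rep q" "rep p - rep q \<in> A"
      using ideal_coset_eq_iff[OF A] by (auto simp: coset_def)
    then obtain x y where xy: "fst p - fst q = x * a + y * b" "snd p - snd q = y * c"
      using rep_diff by blast
    have "y = 0" using eq_0_if_diff_of_residues[OF _ _ _ _ xy(2)] pq(1,2) by (auto simp: box_def)
    hence "x = 0" using eq_0_if_diff_of_residues[of "fst p" a "fst q" x] xy(1) pq(1,2) by (auto simp: box_def)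
    hence "p = q" using xy \<open>y = 0\<close> by (simp add: prod_eq_iff)
    thus "u = v" using pq(3,4) by simp
  qed
  moreover have "inj_on rep box"
    by (rule inj_onI) (auto simp: rep_def dest: basis_coeffs_unique)
  ultimately have "ideal_norm \<O> A = card box"
    unfolding ideal_norm_def coset_def[symmetric] by (simp add: card_image)
  thus ?thesis using a c by (simp add: box_def card_cartesian_product nat_mult_distrib)
qed

lemma ideal_hermite_normal_form:
  assumes A: "nonzero_ideal \<O> A"
  obtains c m \<beta> :: int where "c > 0" "m > 0" "m dvd \<beta>\<^sup>2 + tr\<omega> * \<beta> + nm\<omega>"
    "A = int_span (of_int (c * m)) (of_int c * (of_int \<beta> + \<omega>))"
    "ideal_norm \<O> A = nat (c * c * m)"
proof -
  obtain a b c :: int where a: "a > 0" and c: "c > 0"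
    and A_eq: "A = int_span (of_int a) (of_int b + of_int c * \<omega>)"
    using ideal_eq_int_span[OF A] by blast
  have coeffs: "\<exists>x y. m' = x * a + y * b \<and> n' = y * c" if "of_int m' + of_int n' * \<omega> \<in> A" for m' n'
    using that unfolding A_eq mem_int_span_basis_iff .
  \<comment> \<open>\<open>a \<omega> \<in> A\<close> forces \<open>c dvd b\<close> and \<open>c dvd a\<close>\<close>
  have "of_int a \<in> A" unfolding A_eq by (rule int_span_left)
  hence "of_int 0 + of_int a * \<omega> \<in> A"
    using nonzero_ideal_mult[OF A \<omega>_in_ring_of_integers] by (simp add: mult.commute)
  then obtain x1 m where e1: "0 = x1 * a + m * b" "a = m * c" using coeffs by blast
  have m: "m > 0" using a c e1(2) by (simp add: zero_less_mult_iff)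
  define \<beta> where "\<beta> = - x1"
  have "m * (b + c * x1) = 0" using e1(1)[symmetric] unfolding e1(2) by (simp add: algebra_simps)
  hence b: "b = c * \<beta>" using m unfolding \<beta>_def by simp
  \<comment> \<open>\<open>\<omega> (b + c \<omega>) \<in> A\<close> gives the divisibility condition\<close>
  have "\<omega> * (of_int b + of_int c * \<omega>) = of_int b * \<omega> + of_int c * (\<omega> * \<omega>)"
    by (simp add: algebra_simps)
  also have "\<dots> = of_int (- c * nm\<omega>) + of_int (b + c * tr\<omega>) * \<omega>"
    unfolding \<omega>_square by (simp add: algebra_simps)
  moreover have "of_int b + of_int c * \<omega> \<in> A" unfolding A_eq by (rule int_span_right)
  hence "\<omega> * (of_int b + of_int c * \<omega>) \<in> A"
    using nonzero_ideal_mult[OF A \<omega>_in_ring_of_integers] by blast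
  ultimately obtain x2 y2 where e2: "- c * nm\<omega> = x2 * a + y2 * b" "b + c * tr\<omega> = y2 * c"
    using coeffs by metis
  have "c * y2 = c * (\<beta> + tr\<omega>)" using e2(2) unfolding b by (simp add: algebra_simps)
  hence "y2 = \<beta> + tr\<omega>" using c by simp
  hence "c * (\<beta>\<^sup>2 + tr\<omega> * \<beta> + nm\<omega>) = c * (m * (- x2))"
    using e2(1) unfolding e1(2) b by (simp add: power2_eq_square algebra_simps)
  hence "\<beta>\<^sup>2 + tr\<omega> * \<beta> + nm\<omega> = m * (- x2)" using c by (simp only: mult_cancel_left) simp
  hence "m dvd \<beta>\<^sup>2 + tr\<omega> * \<beta> + nm\<omega>" by simp
  moreover have "A = int_span (of_int (c * m)) (of_int c * (of_int \<beta> + \<omega>))"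
    unfolding A_eq e1(2) b by (simp add: algebra_simps)
  moreover have "ideal_norm \<O> A = nat (c * c * m)"
    using ideal_norm_int_span[OF A a c A_eq] unfolding e1(2) by (simp add: ac_simps)
  ultimately show ?thesis using that c m by blast
qed

lemma ideal_norm_pos: "nonzero_ideal \<O> A \<Longrightarrow> ideal_norm \<O> A \<ge> 1"
proof -
  assume "nonzero_ideal \<O> A"
  then obtain c m \<beta> :: int where "c > 0" "m > 0" and N: "ideal_norm \<O> A = nat (c * c * m)"
    using ideal_hermite_normal_form by metis
  hence "0 < c * c * m" by (simp add: mult_pos_pos)
  thus ?thesis unfolding N by linarith
qed

text \<open>With \<open>h\<close> this gcd, \<open>(\<beta> + \<omega>)/h\<close> has integral trace and norm, hence lies in \<open>\<O>\<close>;
  its \<open>\<omega>\<close>-coordinate \<open>1/h\<close> then forces \<open>h = 1\<close>.\<close>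

lemma hnf_coeffs_coprime:
  assumes k: "\<beta>\<^sup>2 + tr\<omega> * \<beta> + nm\<omega> = m * k" and "m > 0"
  shows "gcd m (gcd k (2 * \<beta> + tr\<omega>)) = 1"
proof -
  define h where "h = gcd m (gcd k (2 * \<beta> + tr\<omega>))"
  have h: "h > 0" using \<open>m > 0\<close> by (simp add: h_def)
  obtain m1 k1 t1 where m1: "m = h * m1" and k1: "k = h * k1" and t1: "2 * \<beta> + tr\<omega> = h * t1"
    unfolding h_def by (meson dvdE dvd_trans gcd_dvd1 gcd_dvd2)
  define w where "w = of_int \<beta> + \<omega>"
  define z where "z = w / of_int h"
  have "complex_of_real (cmod w ^ 2) = w * cnj w" by (rule complex_norm_square)
  also have "\<dots> = of_int (\<beta>\<^sup>2 + tr\<omega> * \<beta> + nm\<omega>)"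
    unfolding w_def by (simp add: cnj_\<omega> algebra_simps power2_eq_square \<omega>_square)
  finally have "cmod w ^ 2 = of_int (m * k)" unfolding k by (metis of_real_eq_iff of_real_of_int_eq)
  hence "cmod z ^ 2 = of_int (m1 * k1)"
    using h unfolding z_def m1 k1 by (simp add: norm_divide power_divide power2_eq_square)
  moreover have "2 * Re z = of_int (2 * \<beta> + tr\<omega>) / of_int h"
    using tr\<omega> unfolding z_def w_def by simp
  hence "2 * Re z = of_int t1" using h unfolding t1 by simp
  moreover have "z \<in> K"
    using quad_field_add[OF quad_field_of_int ring_of_integers_in_quad_field[OF \<omega>_in_ring_of_integers]]
      quad_field_mult[OF _ quad_field_inverse[OF quad_field_of_int[of h]]]
    unfolding z_def w_def divide_inverse by blast
  ultimately have "z \<in> \<O>" by (simp add: ring_of_integers_iff)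
  then obtain p q where pq: "z = of_int p + of_int q * \<omega>" using ring_of_integers_basis by blast
  have "of_int \<beta> + of_int 1 * \<omega> = of_int (h * p) + of_int (h * q) * \<omega>"
    using h pq unfolding z_def w_def by (simp add: field_simps)
  hence "1 = h * q" using basis_coeffs_unique(2) by blast
  thus ?thesis using h zmult_eq_1_iff[of h q] unfolding h_def by auto
qed

lemma scaled_ring_of_integers_zero: "0 \<in> (*) s ` \<O>"
  and scaled_ring_of_integers_add: "x \<in> (*) s ` \<O> \<Longrightarrow> y \<in> (*) s ` \<O> \<Longrightarrow> x + y \<in> (*) s ` \<O>"
  and scaled_ring_of_integers_mult: "r \<in> \<O> \<Longrightarrow> x \<in> (*) s ` \<O> \<Longrightarrow> r * x \<in> (*) s ` \<O>"
proof -
  show "0 \<in> (*) s ` \<O>" by (rule image_eqI[of _ _ 0]) simp_all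
  show "x \<in> (*) s ` \<O> \<Longrightarrow> y \<in> (*) s ` \<O> \<Longrightarrow> x + y \<in> (*) s ` \<O>"
    by (auto simp flip: distrib_left intro: ring_of_integers_add)
  show "r \<in> \<O> \<Longrightarrow> x \<in> (*) s ` \<O> \<Longrightarrow> r * x \<in> (*) s ` \<O>"
    by (auto simp: mult.left_commute intro: ring_of_integers_mult)
qed

lemma hnf_lattice_mult_cnj:
  fixes c m \<beta> k :: int
  assumes m: "m > 0" and k: "\<beta>\<^sup>2 + tr\<omega> * \<beta> + nm\<omega> = m * k"
  defines "\<alpha> \<equiv> of_int (c * m)" and "\<gamma> \<equiv> of_int c * (of_int \<beta> + \<omega>)" and "g \<equiv> c * c * m"
  shows "int_span \<alpha> \<gamma> \<star> int_span \<alpha> (cnj \<gamma>) \<subseteq> (*) (of_int g) ` \<O>"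
    and "of_int g \<in> int_span \<alpha> \<gamma> \<star> int_span \<alpha> (cnj \<gamma>)"
proof -
  define \<gamma>' where "\<gamma>' = cnj \<gamma>"
  have \<gamma>': "\<gamma>' = of_int c * (of_int \<beta> + of_int tr\<omega> - \<omega>)"
    unfolding \<gamma>'_def \<gamma>_def by (simp add: cnj_\<omega> algebra_simps)
  have "(of_int \<beta> + \<omega>) * (of_int \<beta> + of_int tr\<omega> - \<omega>) = of_int (m * k)"
    unfolding k[symmetric] by (simp add: algebra_simps power2_eq_square \<omega>_square)
  hence "\<gamma> * \<gamma>' = of_int g * of_int k"
    unfolding \<gamma>_def \<gamma>' g_def by (simp add: ac_simps)
  moreover have "\<alpha> * \<alpha> = of_int g * of_int m" "\<alpha> * \<gamma>' = of_int g * (of_int \<beta> + of_int tr\<omega> - \<omega>)"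
    "\<gamma> * \<alpha> = of_int g * (of_int \<beta> + \<omega>)"
    unfolding \<alpha>_def \<gamma>_def \<gamma>' g_def by (simp_all add: algebra_simps)
  ultimately have products: "\<alpha> * \<alpha> = of_int g * of_int m"
    "\<alpha> * \<gamma>' = of_int g * (of_int \<beta> + of_int tr\<omega> - \<omega>)"
    "\<gamma> * \<alpha> = of_int g * (of_int \<beta> + \<omega>)" "\<gamma> * \<gamma>' = of_int g * of_int k"
    by blast+
  show "int_span \<alpha> \<gamma> \<star> int_span \<alpha> (cnj \<gamma>) \<subseteq> (*) (of_int g) ` \<O>"
    unfolding \<gamma>'_def[symmetric]
  proof (rule int_span_mult_subsetI)
    show "of_int k' * x \<in> (*) (of_int g) ` \<O>" if "x \<in> (*) (of_int g) ` \<O>" for k' x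
      using scaled_ring_of_integers_mult[OF ring_of_integers_of_int that] .
    have "of_int g * r \<in> (*) (of_int g) ` \<O>" if "r \<in> \<O>" for r
      using that by blast
    thus "\<alpha> * \<alpha> \<in> (*) (of_int g) ` \<O>" "\<alpha> * \<gamma>' \<in> (*) (of_int g) ` \<O>"
      "\<gamma> * \<alpha> \<in> (*) (of_int g) ` \<O>" "\<gamma> * \<gamma>' \<in> (*) (of_int g) ` \<O>"
      unfolding products using \<omega>_in_ring_of_integers
      by (auto intro!: ring_of_integers_add ring_of_integers_diff)
  qed (auto intro: scaled_ring_of_integers_zero scaled_ring_of_integers_add)
  obtain u v w where "u * m + v * k + w * (2 * \<beta> + tr\<omega>) = 1"
    using bezout_int3[of m k] hnf_coeffs_coprime[OF k m] by metis
  \<comment> \<open>so \<open>g\<close> is an integer combination of the four products above\<close>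
  hence "(of_int g :: complex) = of_int g * of_int (u * m + v * k + w * (2 * \<beta> + tr\<omega>))"
    by simp
  also have "\<dots> = of_int u * (\<alpha> * \<alpha>) + of_int v * (\<gamma> * \<gamma>')
                   + of_int w * (\<alpha> * \<gamma>') + of_int w * (\<gamma> * \<alpha>)"
    unfolding products by (simp add: algebra_simps)
  also have "\<dots> = (of_int u * \<alpha>) * \<alpha> + (of_int v * \<gamma>) * \<gamma>'
                   + (of_int w * \<alpha>) * \<gamma>' + (of_int w * \<gamma>) * \<alpha>"
    by (simp only: mult.assoc)
  also have "\<dots> \<in> int_span \<alpha> \<gamma> \<star> int_span \<alpha> \<gamma>'"
    by (intro frac_ideal_mult_add frac_ideal_mult_memI int_span_mem_left int_span_mem_right
        int_span_left int_span_right)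
  finally show "of_int g \<in> int_span \<alpha> \<gamma> \<star> int_span \<alpha> (cnj \<gamma>)" unfolding \<gamma>'_def .
qed

lemma ideal_mult_cnj:
  assumes A: "nonzero_ideal \<O> A"
  shows "A \<star> cnj ` A = (*) (of_nat (ideal_norm \<O> A)) ` \<O>"
proof -
  obtain c m \<beta> :: int where c: "c > 0" and m: "m > 0" and "m dvd \<beta>\<^sup>2 + tr\<omega> * \<beta> + nm\<omega>"
    and A_eq: "A = int_span (of_int (c * m)) (of_int c * (of_int \<beta> + \<omega>))"
    and N: "ideal_norm \<O> A = nat (c * c * m)"
    using ideal_hermite_normal_form[OF A] by blast
  then obtain k where k: "\<beta>\<^sup>2 + tr\<omega> * \<beta> + nm\<omega> = m * k" by blast
  have "cnj ` A = int_span (of_int (c * m)) (cnj (of_int c * (of_int \<beta> + \<omega>)))"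
    unfolding A_eq image_cnj_int_span by simp
  hence sub: "A \<star> cnj ` A \<subseteq> (*) (of_int (c * c * m)) ` \<O>"
    and mem: "of_int (c * c * m) \<in> A \<star> cnj ` A"
    using hnf_lattice_mult_cnj[OF m k, of c] unfolding A_eq by simp_all
  have "(*) (of_int (c * c * m)) ` \<O> \<subseteq> A \<star> cnj ` A"
    using frac_ideal_mult_left_mult[OF _ mem] nonzero_ideal_mult[OF A] by (auto simp: mult.commute)
  moreover have "(of_nat (ideal_norm \<O> A) :: complex) = of_int (c * c * m)"
    using N c m by simp
  ultimately show ?thesis using sub by auto
qed

section \<open>Short vectors and approximation\<close>

lemma scaled_ring_of_integers_le:
  assumes s: "s > 0" and t: "t > 0" and eq: "(*) (of_real s) ` \<O> = (*) (of_real t) ` \<O>"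
  shows "t \<le> s"
proof -
  have "complex_of_real s \<in> (*) (of_real t) ` \<O>"
    unfolding eq[symmetric] by (rule image_eqI[of _ _ 1]) simp_all
  then obtain r where r: "r \<in> \<O>" "complex_of_real s = of_real t * r" by blast
  hence "r = of_real (s / t)" using t by (simp add: field_simps)
  then obtain k where k: "r = of_int k" using ring_of_integers_real[OF r(1)] by auto
  hence "s = t * of_int k" using r(2) by (metis of_real_eq_iff of_real_mult of_real_of_int_eq)
  moreover from this have "k \<ge> 1" using s t by (simp add: zero_less_mult_iff)
  ultimately show ?thesis using t by simp
qed

lemma scaled_ring_of_integers_inj:
  "s > 0 \<Longrightarrow> t > 0 \<Longrightarrow> (*) (of_real s) ` \<O> = (*) (of_real t) ` \<O> \<Longrightarrow> s = t"
  using scaled_ring_of_integers_le[of s t] scaled_ring_of_integers_le[of t s] by fastforce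

lemma ideal_ex_small_int_coords_element:
  fixes k :: int
  assumes A: "nonzero_ideal \<O> A" and "k \<ge> 0" and "int (ideal_norm \<O> A) < (k + 1)\<^sup>2"
  shows "\<exists>i j. \<bar>i\<bar> \<le> k \<and> \<bar>j\<bar> \<le> k \<and> of_int i + of_int j * \<theta> \<noteq> 0 \<and> of_int i + of_int j * \<theta> \<in> A"
proof -
  define coset where "coset x = (\<lambda>c. x + c) ` A" for x
  define f where "f = (\<lambda>(i::int, j::int). of_int i + of_int j * \<theta>)"
  define P :: "(int \<times> int) set" where "P = {0..k} \<times> {0..k}"
  have f_eq: "f p = f q \<Longrightarrow> p = q" for p q
    using sqrt_d_pos by (auto simp: f_def prod_eq_iff complex_eq_iff case_prod_beta)
  have "ideal_norm \<O> A \<ge> 1" using ideal_norm_pos[OF A] .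
  hence fin: "finite (coset ` \<O>)" unfolding ideal_norm_def coset_def by (metis card.infinite not_one_le_zero)
  have "f ` P \<subseteq> \<O>"
    using \<theta>_in_ring_of_integers by (auto simp: f_def intro!: ring_of_integers_add ring_of_integers_mult)
  hence "card ((coset \<circ> f) ` P) \<le> ideal_norm \<O> A"
    unfolding ideal_norm_def coset_def[symmetric] image_comp[symmetric] using fin by (intro card_mono) auto
  also have "\<dots> < card P"
  proof -
    have "int (card P) = (k + 1)\<^sup>2" using \<open>k \<ge> 0\<close> by (simp add: P_def power2_eq_square)
    thus ?thesis using assms(3) by linarith
  qed
  finally have "\<not> inj_on (coset \<circ> f) P" using pigeonhole by blast
  then obtain p q where pq: "p \<in> P" "q \<in> P" "p \<noteq> q" "coset (f p) = coset (f q)"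
    unfolding inj_on_def by auto
  obtain i j i' j' where p: "p = (i, j)" and q: "q = (i', j')" by fastforce
  have "f p - f q \<in> A" using pq(4) ideal_coset_eq_iff[OF A] by (simp add: coset_def)
  moreover have "f p - f q = of_int (i - i') + of_int (j - j') * \<theta>"
    unfolding f_def p q by (simp add: algebra_simps)
  moreover have "f p - f q \<noteq> 0" using f_eq[of p q] pq(3) by auto
  moreover have "\<bar>i - i'\<bar> \<le> k" "\<bar>j - j'\<bar> \<le> k" using pq(1,2) unfolding p q P_def by auto
  ultimately show ?thesis by metis
qed

lemma ideal_ex_short_element:
  assumes A: "nonzero_ideal \<O> A"
  shows "\<exists>\<gamma>\<in>A. \<gamma> \<noteq> 0 \<and> cmod \<gamma> \<le> 2 * (1 + sqrt_d) * sqrt (ideal_norm \<O> A)"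
proof -
  define N where "N = real (ideal_norm \<O> A)"
  define k where "k = \<lceil>sqrt N\<rceil>"
  have N1: "sqrt N \<ge> 1" using ideal_norm_pos[OF A] by (simp add: N_def)
  have k: "sqrt N \<le> of_int k" "of_int k \<le> sqrt N + 1" unfolding k_def by linarith+
  hence "k \<ge> 0" using N1 by linarith
  have "N \<le> of_int k ^ 2" using power_mono[OF k(1), of 2] N1 by simp
  hence "real_of_int (int (ideal_norm \<O> A)) \<le> real_of_int (k * k)" by (simp add: N_def power2_eq_square)
  hence "int (ideal_norm \<O> A) \<le> k * k" by (simp only: of_int_le_iff)
  hence "int (ideal_norm \<O> A) < (k + 1)\<^sup>2" using \<open>k \<ge> 0\<close> by (simp add: power2_eq_square algebra_simps)
  then obtain i j where ij: "\<bar>i\<bar> \<le> k" "\<bar>j\<bar> \<le> k"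
    "of_int i + of_int j * \<theta> \<noteq> 0" "of_int i + of_int j * \<theta> \<in> A"
    using ideal_ex_small_int_coords_element[OF A \<open>k \<ge> 0\<close>] by blast
  have "cmod (of_int i + of_int j * \<theta>) \<le> \<bar>of_int i\<bar> + \<bar>of_int j\<bar> * sqrt_d"
    using norm_triangle_ineq[of "of_int i" "of_int j * \<theta>"] by (simp add: norm_mult \<theta>_def)
  also have "\<dots> \<le> of_int k * (1 + sqrt_d)"
    using ij(1,2) sqrt_d_pos by (simp add: algebra_simps add_mono mult_right_mono)
  also have "\<dots> \<le> 2 * sqrt N * (1 + sqrt_d)"
    using k(2) N1 sqrt_d_pos by (intro mult_right_mono) linarith+
  also have "\<dots> = 2 * (1 + sqrt_d) * sqrt N" by simp
  finally show ?thesis using ij(3,4) unfolding N_def by (intro bexI[of _ "of_int i + of_int j * \<theta>"]) simp_all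
qed

lemma ex_ring_of_integers_near: "\<exists>u\<in>\<O>. cmod (z - u) \<le> (1 + sqrt_d) / 2"
proof -
  define a where "a = \<lfloor>Re z + 1/2\<rfloor>"
  define b where "b = \<lfloor>Im z / sqrt_d + 1/2\<rfloor>"
  have "\<bar>Re z - of_int a\<bar> \<le> 1/2" "\<bar>Im z / sqrt_d - of_int b\<bar> \<le> 1/2"
    unfolding a_def b_def by linarith+
  moreover have "Im z - of_int b * sqrt_d = sqrt_d * (Im z / sqrt_d - of_int b)"
    using sqrt_d_pos by (simp add: algebra_simps)
  hence "\<bar>Im z - of_int b * sqrt_d\<bar> = sqrt_d * \<bar>Im z / sqrt_d - of_int b\<bar>"
    using sqrt_d_pos by (simp add: abs_mult)
  ultimately have "\<bar>Re z - of_int a\<bar> + \<bar>Im z - of_int b * sqrt_d\<bar> \<le> 1/2 + sqrt_d * (1/2)"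
    using sqrt_d_pos by (intro add_mono) (simp_all add: mult_left_mono)
  moreover have "cmod (z - (of_int a + of_int b * \<theta>)) \<le> \<bar>Re z - of_int a\<bar> + \<bar>Im z - of_int b * sqrt_d\<bar>"
    using cmod_le[of "z - (of_int a + of_int b * \<theta>)"] by (simp add: \<theta>_def)
  moreover have "of_int a + of_int b * \<theta> \<in> \<O>"
    using \<theta>_in_ring_of_integers by (simp add: ring_of_integers_add ring_of_integers_mult)
  ultimately show ?thesis by (intro bexI[of _ "of_int a + of_int b * \<theta>"]) simp_all
qed

lemma nonzero_ideal_ring_of_integers: "nonzero_ideal \<O> \<O>"
  unfolding nonzero_ideal_def
  using ring_of_integers_one by (fastforce intro: ring_of_integers_add ring_of_integers_mult)

lemma frac_ideal_mult_ring_of_integers: "nonzero_ideal \<O> A \<Longrightarrow> \<O> \<star> A = A"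
proof
  assume A: "nonzero_ideal \<O> A"
  show "\<O> \<star> A \<subseteq> A"
    by (rule frac_ideal_mult_subsetI) (use A in \<open>auto intro: nonzero_ideal_zero nonzero_ideal_add nonzero_ideal_mult\<close>)
  show "A \<subseteq> \<O> \<star> A" using frac_ideal_mult_memI[OF ring_of_integers_one, of _ A] by auto
qed

lemma frac_ideal_mult_scaled_ring_of_integers: "((*) s ` \<O>) \<star> ((*) t ` \<O>) = (*) (s * t) ` \<O>"
proof -
  have "((*) s ` \<O>) \<star> ((*) t ` \<O>) = (*) t ` ((*) s ` (\<O> \<star> \<O>))"
    unfolding frac_ideal_mult_scale_left frac_ideal_mult_scale_right ..
  thus ?thesis
    by (simp add: image_image ac_simps frac_ideal_mult_ring_of_integers[OF nonzero_ideal_ring_of_integers])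
qed

lemma fractional_ideal_ring_of_integers: "fractional_ideal K \<O> \<O>"
  unfolding fractional_ideal_def
proof (intro conjI ballI)
  show "\<exists>c\<in>\<O>. c \<noteq> 0 \<and> (*) c ` \<O> \<subseteq> \<O>" by (intro bexI[of _ 1]) auto
qed (use nonzero_ideal_ring_of_integers ring_of_integers_in_quad_field in
      \<open>auto simp: nonzero_ideal_def\<close>)

lemma fractional_ideal_denominator:
  assumes J: "fractional_ideal K \<O> J" and c: "c \<in> \<O>" "c \<noteq> 0" "(*) c ` J \<subseteq> \<O>"
  shows "nonzero_ideal \<O> ((*) c ` J)"
  unfolding nonzero_ideal_def
proof (intro conjI ballI)
  obtain x where "x \<in> J" "x \<noteq> 0" using J unfolding fractional_ideal_def by blast
  hence "c * x \<in> (*) c ` J" "c * x \<noteq> 0" using c(2) by auto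
  thus "(*) c ` J \<noteq> {0}" by blast
  show "0 \<in> (*) c ` J" using J unfolding fractional_ideal_def by (metis image_eqI mult_zero_right)
  show "x + y \<in> (*) c ` J" if "x \<in> (*) c ` J" "y \<in> (*) c ` J" for x y
    using that J unfolding fractional_ideal_def by (auto simp flip: distrib_left)
  show "r * x \<in> (*) c ` J" if "r \<in> \<O>" "x \<in> (*) c ` J" for r x
    using that J unfolding fractional_ideal_def by (auto simp: mult.left_commute)
qed (use c in simp)

lemma fractional_ideal_ex_short_element:
  assumes J: "fractional_ideal K \<O> J" and q: "q > 0" and JJ: "J \<star> cnj ` J = (*) (of_real q) ` \<O>"
  shows "\<exists>x\<in>J. x \<noteq> 0 \<and> cmod x \<le> 2 * (1 + sqrt_d) * sqrt q"
proof -
  obtain c where c: "c \<in> \<O>" "c \<noteq> 0" "(*) c ` J \<subseteq> \<O>" using J unfolding fractional_ideal_def by blast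
  define A where "A = (*) c ` J"
  have A: "nonzero_ideal \<O> A" unfolding A_def using fractional_ideal_denominator[OF J c] .
  have "(*) (of_real (real (ideal_norm \<O> A))) ` \<O> = A \<star> cnj ` A"
    using ideal_mult_cnj[OF A] by simp
  also have "\<dots> = (*) (of_real (cmod c ^ 2 * q)) ` \<O>"
    unfolding A_def scaled_frac_ideal_mult_cnj JJ by (simp add: image_image mult.assoc)
  finally have N: "real (ideal_norm \<O> A) = cmod c ^ 2 * q"
    using ideal_norm_pos[OF A] q c(2) by (intro scaled_ring_of_integers_inj) simp_all
  obtain \<gamma> where \<gamma>: "\<gamma> \<in> A" "\<gamma> \<noteq> 0" "cmod \<gamma> \<le> 2 * (1 + sqrt_d) * sqrt (ideal_norm \<O> A)"
    using ideal_ex_short_element[OF A] by blast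
  then obtain x where x: "x \<in> J" "\<gamma> = c * x" unfolding A_def by blast
  have "cmod c * cmod x \<le> cmod c * (2 * (1 + sqrt_d) * sqrt q)"
    using \<gamma>(3) unfolding x(2) N by (simp add: norm_mult real_sqrt_mult ac_simps)
  hence "cmod x \<le> 2 * (1 + sqrt_d) * sqrt q" using c(2) by simp
  thus ?thesis using x \<gamma>(2) by auto
qed

lemma fractional_ideal_approximation:
  assumes J: "fractional_ideal K \<O> J" and q: "q > 0" and JJ: "J \<star> cnj ` J = (*) (of_real q) ` \<O>"
  shows "\<exists>x\<in>J. cmod (p - x) \<le> (1 + sqrt_d)\<^sup>2 * sqrt q"
proof -
  obtain x0 where x0: "x0 \<in> J" "x0 \<noteq> 0" "cmod x0 \<le> 2 * (1 + sqrt_d) * sqrt q"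
    using fractional_ideal_ex_short_element[OF J q JJ] by blast
  obtain u where u: "u \<in> \<O>" "cmod (p / x0 - u) \<le> (1 + sqrt_d) / 2"
    using ex_ring_of_integers_near by blast
  have "u * x0 \<in> J" using J u(1) x0(1) unfolding fractional_ideal_def by blast
  have "p - x0 * u = x0 * (p / x0 - u)" using x0(2) by (simp add: field_simps)
  hence "cmod (p - x0 * u) = cmod x0 * cmod (p / x0 - u)" by (simp add: norm_mult)
  also have "\<dots> \<le> (2 * (1 + sqrt_d) * sqrt q) * ((1 + sqrt_d) / 2)"
    using x0(3) u(2) q sqrt_d_pos by (intro mult_mono) simp_all
  also have "\<dots> = (1 + sqrt_d)\<^sup>2 * sqrt q" by (simp add: power2_eq_square)
  finally show ?thesis using \<open>u * x0 \<in> J\<close> by (auto simp: mult.commute)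
qed

lemma fractional_ideal_mult_ideal:
  assumes I: "fractional_ideal K \<O> I" and C: "nonzero_ideal \<O> C"
  shows "fractional_ideal K \<O> (I \<star> C)"
  unfolding fractional_ideal_def
proof (intro conjI ballI)
  have IK: "I \<subseteq> K" and I_mult: "\<And>r x. r \<in> \<O> \<Longrightarrow> x \<in> I \<Longrightarrow> r * x \<in> I"
    using I unfolding fractional_ideal_def by blast+
  obtain c where c: "c \<in> \<O>" "c \<noteq> 0" "(*) c ` I \<subseteq> \<O>" using I unfolding fractional_ideal_def by blast
  have CO: "C \<subseteq> \<O>" using nonzero_ideal_subset[OF C] .
  show "I \<star> C \<subseteq> K"
    using IK CO ring_of_integers_in_quad_field quad_field_of_int[of 0]
    by (intro frac_ideal_mult_subsetI) (auto intro: quad_field_add quad_field_mult)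
  show "0 \<in> I \<star> C" by (rule zero_in_frac_ideal_mult)
  obtain x y where "x \<in> I" "x \<noteq> 0" "y \<in> C" "y \<noteq> 0"
    using I nonzero_ideal_ex_nonzero[OF C] unfolding fractional_ideal_def by blast
  hence "x * y \<in> I \<star> C" "x * y \<noteq> 0" by (simp_all add: frac_ideal_mult_memI)
  thus "I \<star> C \<noteq> {0}" by blast
  show "u + v \<in> I \<star> C" if "u \<in> I \<star> C" "v \<in> I \<star> C" for u v
    using that by (rule frac_ideal_mult_add)
  show "r * u \<in> I \<star> C" if "r \<in> \<O>" "u \<in> I \<star> C" for r u
    using that I_mult by (intro frac_ideal_mult_left_mult) auto
  have "I \<star> C \<subseteq> {z. c * z \<in> \<O>}"
    using c CO by (intro frac_ideal_mult_subsetI)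
      (auto simp: distrib_left mult.assoc[symmetric] intro: ring_of_integers_add ring_of_integers_mult)
  thus "\<exists>c\<in>\<O>. c \<noteq> 0 \<and> (*) c ` (I \<star> C) \<subseteq> \<O>" using c by blast
qed

section \<open>The descent\<close>

lemma fractional_ideal_scale_inverse:
  assumes J: "fractional_ideal K \<O> J" and w: "w \<in> J" "w \<noteq> 0"
  shows "fractional_ideal K \<O> ((*) (inverse w) ` J)" and "\<O> \<subseteq> (*) (inverse w) ` J"
proof -
  have JK: "J \<subseteq> K" and J_add: "\<And>x y. x \<in> J \<Longrightarrow> y \<in> J \<Longrightarrow> x + y \<in> J"
    and J_mult: "\<And>r x. r \<in> \<O> \<Longrightarrow> x \<in> J \<Longrightarrow> r * x \<in> J"
    using J unfolding fractional_ideal_def by blast+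
  obtain c where c: "c \<in> \<O>" "c \<noteq> 0" "(*) c ` J \<subseteq> \<O>" using J unfolding fractional_ideal_def by blast
  show "\<O> \<subseteq> (*) (inverse w) ` J"
  proof
    fix r assume "r \<in> \<O>"
    thus "r \<in> (*) (inverse w) ` J" using J_mult[OF _ w(1)] w(2) by (intro image_eqI[of _ _ "r * w"]) simp_all
  qed
  \<comment> \<open>\<open>u = c w \<in> \<O>\<close>, and \<open>u (cnj u) w\<^sup>-\<^sup>1 = (cnj u) c\<close> clears the denominator of \<open>w\<^sup>-\<^sup>1 J\<close>\<close>
  define u where "u = c * w"
  have u: "u \<in> \<O>" "u \<noteq> 0" using c w unfolding u_def by auto
  have "u * cnj u * (inverse w * x) = cnj u * (c * x)" for x
    using w(2) unfolding u_def by (simp add: field_simps)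
  have "(*) (u * cnj u) ` ((*) (inverse w) ` J) \<subseteq> \<O>"
  proof
    fix z assume "z \<in> (*) (u * cnj u) ` ((*) (inverse w) ` J)"
    then obtain x where "x \<in> J" "z = cnj u * (c * x)"
      using \<open>\<And>x. u * cnj u * (inverse w * x) = cnj u * (c * x)\<close> by auto
    moreover have "c * x \<in> \<O>" using c(3) \<open>x \<in> J\<close> by blast
    ultimately show "z \<in> \<O>" using ring_of_integers_mult ring_of_integers_cnj[OF u(1)] by simp
  qed
  moreover have "u * cnj u \<in> \<O>" "u * cnj u \<noteq> 0"
    using u by (simp_all add: ring_of_integers_mult ring_of_integers_cnj)
  ultimately have denom: "\<exists>c\<in>\<O>. c \<noteq> 0 \<and> (*) c ` ((*) (inverse w) ` J) \<subseteq> \<O>" by blast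
  have "inverse w \<in> K" using JK w(1) by (blast intro: quad_field_inverse)
  show "fractional_ideal K \<O> ((*) (inverse w) ` J)"
    unfolding fractional_ideal_def
  proof (intro conjI ballI denom)
    show "(*) (inverse w) ` J \<subseteq> K" using JK \<open>inverse w \<in> K\<close> by (auto intro: quad_field_mult)
    show "0 \<in> (*) (inverse w) ` J" using J unfolding fractional_ideal_def by (metis image_eqI mult_zero_right)
    have "inverse w * w \<in> (*) (inverse w) ` J" using w(1) by (rule imageI)
    moreover have "inverse w * w \<noteq> 0" using w(2) by simp
    ultimately show "(*) (inverse w) ` J \<noteq> {0}" by blast
    show "x + y \<in> (*) (inverse w) ` J" if "x \<in> (*) (inverse w) ` J" "y \<in> (*) (inverse w) ` J" for x y
      using that J_add by (auto simp flip: distrib_left)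
    show "r * x \<in> (*) (inverse w) ` J" if "r \<in> \<O>" "x \<in> (*) (inverse w) ` J" for r x
      using that J_mult by (auto simp: mult.left_commute)
  qed
qed

definition small_frac_ideal :: "complex set \<Rightarrow> real \<Rightarrow> complex set \<Rightarrow> bool" where
  "small_frac_ideal C \<epsilon> I \<longleftrightarrow> fractional_ideal K \<O> I \<and> \<O> \<subseteq> I \<and>
     (\<exists>q. 0 < q \<and> q \<le> \<epsilon> \<and> (I \<star> C) \<star> cnj ` (I \<star> C) = (*) (of_real q) ` \<O>)"

lemma ex_small_frac_ideal:
  assumes C: "nonzero_ideal \<O> C" and \<epsilon>: "\<epsilon> > 0"
  shows "\<exists>I. small_frac_ideal C \<epsilon> I"
proof -
  define N where "N = real (ideal_norm \<O> C)"
  obtain s :: nat where s: "real s > sqrt (N / \<epsilon>)" using reals_Archimedean2 by blast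
  have N1: "N \<ge> 1" using ideal_norm_pos[OF C] by (simp add: N_def)
  hence s0: "s > 0" using s \<epsilon> by (metis gr_zeroI less_le_not_le of_nat_0 real_sqrt_ge_zero zero_le_divide_iff zero_le_one order.trans)
  define I where "I = (*) (inverse (of_nat s)) ` \<O>"
  have "of_nat s \<in> \<O>" "(of_nat s :: complex) \<noteq> 0" using ring_of_integers_of_int[of "int s"] s0 by simp_all
  hence I: "fractional_ideal K \<O> I" "\<O> \<subseteq> I"
    using fractional_ideal_scale_inverse[OF fractional_ideal_ring_of_integers] unfolding I_def by blast+
  have "(I \<star> C) \<star> cnj ` (I \<star> C)
      = (*) (of_real (cmod (inverse (of_nat s)) ^ 2) * of_nat (ideal_norm \<O> C)) ` \<O>"
  proof -
    have IC: "I \<star> C = (*) (inverse (of_nat s)) ` C"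
      unfolding I_def frac_ideal_mult_scale_left frac_ideal_mult_ring_of_integers[OF C] ..
    show ?thesis unfolding IC scaled_frac_ideal_mult_cnj ideal_mult_cnj[OF C] image_mult_image_mult ..
  qed
  also have "of_real (cmod (inverse (of_nat s)) ^ 2) * of_nat (ideal_norm \<O> C) = complex_of_real (N / s\<^sup>2)"
    by (simp add: N_def norm_inverse power_inverse divide_inverse)
  finally have "(I \<star> C) \<star> cnj ` (I \<star> C) = (*) (of_real (N / s\<^sup>2)) ` \<O>" .
  moreover have "N / s\<^sup>2 \<le> \<epsilon>"
  proof -
    have "N / \<epsilon> \<le> s\<^sup>2" using power_mono[OF less_imp_le[OF s], of 2] N1 \<epsilon> by simp
    thus ?thesis using \<epsilon> s0 by (simp add: field_simps)
  qed
  moreover have "N / s\<^sup>2 > 0" using N1 s0 by simp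
  ultimately show ?thesis using I unfolding small_frac_ideal_def by blast
qed

lemma small_frac_ideal_mult_subset: "small_frac_ideal C \<epsilon> I \<Longrightarrow> C \<subseteq> I \<star> C"
  using frac_ideal_mult_memI[of 1 I _ C] unfolding small_frac_ideal_def by force

lemma small_frac_ideal_divide:
  assumes C: "nonzero_ideal \<O> C" and I: "small_frac_ideal C \<epsilon> I"
    and w: "w \<in> I \<star> C" "sqrt (ideal_norm \<O> C) \<le> cmod w"
  shows "small_frac_ideal C \<epsilon> ((*) (inverse w) ` (I \<star> C))"
proof -
  define N where "N = real (ideal_norm \<O> C)"
  have N1: "N \<ge> 1" using ideal_norm_pos[OF C] by (simp add: N_def)
  have w0: "w \<noteq> 0" using w(2) N1 unfolding N_def by auto
  obtain q where q: "0 < q" "q \<le> \<epsilon>" and qJ: "(I \<star> C) \<star> cnj ` (I \<star> C) = (*) (of_real q) ` \<O>"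
    using I unfolding small_frac_ideal_def by blast
  have J: "fractional_ideal K \<O> (I \<star> C)"
    using fractional_ideal_mult_ideal I C unfolding small_frac_ideal_def by blast
  define q' where "q' = q * N / cmod w ^ 2"
  have "(((*) (inverse w) ` (I \<star> C)) \<star> C) \<star> cnj ` (((*) (inverse w) ` (I \<star> C)) \<star> C)
      = (*) (of_real (cmod (inverse w) ^ 2)) ` (((I \<star> C) \<star> cnj ` (I \<star> C)) \<star> (C \<star> cnj ` C))"
    unfolding frac_ideal_mult_scale_left[of "inverse w" "I \<star> C" C] scaled_frac_ideal_mult_cnj
      frac_ideal_mult_times_cnj[of "I \<star> C" C] ..
  also have "\<dots> = (*) (of_real (cmod (inverse w) ^ 2) * (of_real q * of_nat (ideal_norm \<O> C))) ` \<O>"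
    unfolding qJ ideal_mult_cnj[OF C] frac_ideal_mult_scaled_ring_of_integers image_mult_image_mult ..
  also have "of_real (cmod (inverse w) ^ 2) * (of_real q * of_nat (ideal_norm \<O> C)) = complex_of_real q'"
    by (simp add: q'_def N_def norm_inverse power_inverse divide_inverse)
  finally have "(((*) (inverse w) ` (I \<star> C)) \<star> C) \<star> cnj ` (((*) (inverse w) ` (I \<star> C)) \<star> C)
      = (*) (of_real q') ` \<O>" .
  moreover have "q' \<le> q"
  proof -
    have "N \<le> cmod w ^ 2" using power_mono[OF w(2), of 2] N1 unfolding N_def by simp
    thus ?thesis using q(1) w0 unfolding q'_def by (simp add: field_simps mult_left_mono)
  qed
  moreover have "q' > 0" using q(1) N1 w0 unfolding q'_def by simp
  ultimately show ?thesis
    unfolding small_frac_ideal_def using fractional_ideal_scale_inverse[OF J w(1) w0] q(2) by auto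
qed

lemma small_frac_ideal_step:
  assumes C: "nonzero_ideal \<O> C" and r: "(1 + sqrt_d)\<^sup>2 * sqrt \<epsilon> < r"
    and far: "\<And>x c. x \<in> ball p r \<Longrightarrow> c \<in> C \<Longrightarrow> sqrt (ideal_norm \<O> C) \<le> dist c x"
    and I: "small_frac_ideal C \<epsilon> I"
  shows "\<exists>x \<in> I \<star> C - C. \<forall>y\<in>C. small_frac_ideal C \<epsilon> ((\<lambda>z. z / (x + y)) ` (I \<star> C))"
proof -
  obtain q where q: "0 < q" "q \<le> \<epsilon>" and qJ: "(I \<star> C) \<star> cnj ` (I \<star> C) = (*) (of_real q) ` \<O>"
    using I unfolding small_frac_ideal_def by blast
  have J: "fractional_ideal K \<O> (I \<star> C)"
    using fractional_ideal_mult_ideal I C unfolding small_frac_ideal_def by blast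
  obtain x where x: "x \<in> I \<star> C" "cmod (p - x) \<le> (1 + sqrt_d)\<^sup>2 * sqrt q"
    using fractional_ideal_approximation[OF J q(1) qJ] by blast
  have "(1 + sqrt_d)\<^sup>2 * sqrt q \<le> (1 + sqrt_d)\<^sup>2 * sqrt \<epsilon>" using q(2) by (simp add: mult_left_mono)
  hence x_near: "x \<in> ball p r" using x(2) r by (simp add: dist_norm)
  have "x \<notin> C" using far[OF x_near] ideal_norm_pos[OF C] by force
  moreover have "small_frac_ideal C \<epsilon> ((\<lambda>z. z / (x + y)) ` (I \<star> C))" if y: "y \<in> C" for y
  proof -
    have "- y \<in> C" using ideal_int_mult[OF C y, of "-1"] by simp
    hence "sqrt (ideal_norm \<O> C) \<le> dist (- y) x" using far[OF x_near] by blast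
    also have "dist (- y) x = cmod (x + y)" by (simp add: dist_norm norm_minus_commute add.commute)
    finally have "sqrt (ideal_norm \<O> C) \<le> cmod (x + y)" .
    moreover have "x + y \<in> I \<star> C"
      using frac_ideal_mult_add[OF x(1)] small_frac_ideal_mult_subset[OF I] y by blast
    moreover have "(\<lambda>z. z / (x + y)) ` (I \<star> C) = (*) (inverse (x + y)) ` (I \<star> C)"
      by (simp add: divide_inverse mult.commute)
    ultimately show ?thesis using small_frac_ideal_divide[OF C I] by simp
  qed
  ultimately show ?thesis using x(1) by blast
qed

lemma not_euclidean_ideal_if_uncovered:
  assumes C: "nonzero_ideal \<O> C"
    and "\<exists>S. open S \<and> S \<noteq> {} \<and> S \<subseteq> - (\<Union>c\<in>C. ball c (sqrt (real (ideal_norm \<O> C))))"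
  shows "\<not> euclidean_ideal K \<O> C"
proof
  assume "euclidean_ideal K \<O> C"
  then obtain \<psi> :: "complex set \<Rightarrow> nat" where \<psi>:
    "\<And>I x. fractional_ideal K \<O> I \<Longrightarrow> \<O> \<subseteq> I \<Longrightarrow> x \<in> I \<star> C - C \<Longrightarrow>
       \<exists>y\<in>C. \<psi> ((\<lambda>z. z / (x + y)) ` (I \<star> C)) < \<psi> I"
    unfolding euclidean_ideal_def by blast
  obtain S p r where "open S" "S \<subseteq> - (\<Union>c\<in>C. ball c (sqrt (real (ideal_norm \<O> C))))"
    "p \<in> S" "r > 0" "ball p r \<subseteq> S"
    using assms(2) openE by (metis ex_in_conv)
  hence far: "\<And>x c. x \<in> ball p r \<Longrightarrow> c \<in> C \<Longrightarrow> sqrt (ideal_norm \<O> C) \<le> dist c x"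
    by (force simp: subset_iff)
  define \<epsilon> where "\<epsilon> = (r / (2 * (1 + sqrt_d)\<^sup>2))\<^sup>2"
  have "1 + sqrt_d > 0" using sqrt_d_pos by linarith
  hence \<epsilon>: "\<epsilon> > 0" "(1 + sqrt_d)\<^sup>2 * sqrt \<epsilon> < r"
    using \<open>r > 0\<close> unfolding \<epsilon>_def by simp_all
  \<comment> \<open>a small fractional ideal with least \<open>\<psi>\<close>-value cannot be reduced further\<close>
  obtain I0 where "small_frac_ideal C \<epsilon> I0" using ex_small_frac_ideal[OF C \<epsilon>(1)] by blast
  then obtain I where I: "small_frac_ideal C \<epsilon> I"
    and I_min: "\<And>I'. small_frac_ideal C \<epsilon> I' \<Longrightarrow> \<psi> I \<le> \<psi> I'"
    using ex_has_least_nat[of "small_frac_ideal C \<epsilon>" I0 \<psi>] by blast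
  obtain x where x: "x \<in> I \<star> C - C" and small: "\<forall>y\<in>C. small_frac_ideal C \<epsilon> ((\<lambda>z. z / (x + y)) ` (I \<star> C))"
    using small_frac_ideal_step[OF C \<epsilon>(2) far I] by blast
  obtain y where "y \<in> C" "\<psi> ((\<lambda>z. z / (x + y)) ` (I \<star> C)) < \<psi> I"
    using \<psi>[OF _ _ x] I unfolding small_frac_ideal_def by blast
  thus False using I_min small by (meson leD)
qed

end

theorem proposition3p1:
  fixes d :: nat and C :: "complex set"
  defines "K \<equiv> quad_field d"
  defines "OK \<equiv> ring_of_integers (quad_field d)"
  assumes "d > 0"
    and "units_of_ring OK = {1, -1}"
    and "nonzero_ideal OK C"
    and "\<exists>S. open S \<and> S \<noteq> {} \<and>
           S \<subseteq> - (\<Union>c\<in>C. ball c (sqrt (real (ideal_norm OK C))))"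
  shows "\<not> euclidean_ideal K OK C"
proof -
  interpret imag_quadratic_field d by unfold_locales (rule \<open>d > 0\<close>)
  show ?thesis
    using not_euclidean_ideal_if_uncovered assms(5,6) unfolding K_def OK_def by blast
qed

end
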